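(* Let $V=\mathbb R^{p,q}$ with $p\equiv3\pmod4$, take $p'=p$, $p''=0$, and let $\hat K=\hat K(p,0)\subset\mathrm{Spin}(p,q)$. A $C\ell^0_{p,q}$-module $W$ is irreducible if and only if it is irreducible as a $\hat K$-module. In this case the space of $\hat K$-invariant symmetric bilinear forms on $W$ is one-dimensional and is spanned by a positive definite scalar product. Moreover, if $W$ is an irreducible $C\ell^0_{p,q}$-module and $\Pi:\wedge^2W\to V$ is any $\mathfrak o(V)$-equivariant linear map, then either $\Pi=0$ or $b(\Pi)$ is a (positive or negative) definite $\hat K$-invariant symmetric bilinear form on $W$.
   Context: Let $V=\mathbb{R}^{p,q}$ be $\mathbb R^{p+q}$ with the scalar product $\langle x,y\rangle=\sum_{i=1}^{p}x^iy^i-\sum_{j=p+1}^{p+q}x^jy^j$ and its standard orthonormal basis $e_1,\dots,e_{p+q}$. $C\ell_{p,q}$ is generated by $V$ subject to $xy+yx=-2\langle x,y\rangle 1$, with even part $C\ell^0_{p,q}$; $\mathrm{Pin}$ is generated by unit vectors, $\mathrm{Spin}=\mathrm{Pin}\cap C\ell^0$. Identify $\mathfrak{o}(V)=\wedge^2V$ via $(x\wedge y)(z)=\langle y,z\rangle x-\langle x,z\rangle y$; $x\wedge y\mapsto-\frac14(xy-yx)$ identifies $\mathfrak o(V)$ with $\mathfrak{spin}(V)$, through which $\mathfrak o(V)$ acts on $C\ell^0(V)$-modules. $b(\Pi)(s,t)=\langle e_1,\Pi(e_2\cdots e_p s\wedge t)\rangle$. $\hat K(p,0)=\mathrm{Spin}(p)\cdot\iota(\mathrm{Pin}(q))$,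 where $\mathrm{Spin}(p)$ is the spin group of the span of $e_1,\dots,e_p$ and $\iota:C\ell(\mathbb R^{q,0})\to C\ell^0_{p,q}$ is the algebra embedding extending $x\mapsto e_1\cdots e_p\,x'$, with $x\mapsto x'$ sending the $k$-th standard basis vector of $\mathbb R^q$ to $e_{p+k}$. *)

theory Defs
  imports "HOL-Analysis.Analysis"
begin

text \<open>Vectors of R^{p,q} are functions nat => real vanishing at indices >= p+q.
  The paper's e_1,...,e_{p+q} are our e_0,...,e_{p+q-1}.\<close>

definition Vspace :: "nat \<Rightarrow> (nat \<Rightarrow> real) set" where
  "Vspace n = {v. \<forall>i\<ge>n. v i = 0}"

definition std_basis :: "nat \<Rightarrow> nat \<Rightarrow> real" where
  "std_basis k = (\<lambda>i. if i = k then 1 else 0)"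

definition pq_inner :: "nat \<Rightarrow> nat \<Rightarrow> (nat \<Rightarrow> real) \<Rightarrow> (nat \<Rightarrow> real) \<Rightarrow> real" where
  "pq_inner p q x y = (\<Sum>i<p. x i * y i) - (\<Sum>i\<in>{p..<p+q}. x i * y i)"

section \<open>The Clifford algebra Cl_{p,q} (relation xy+yx = -2<x,y>)\<close>

text \<open>An element of Cl_{p,q} is given by its coefficients on the basis blades
  e_A = e_{a1} ... e_{ak} (a1 < ... < ak, A = {a1,...,ak} \<subseteq> {0..<p+q}).\<close>

type_synonym mv = "nat set \<Rightarrow> real"

text \<open>e_i^2 = -<e_i,e_i>\<close>
definition cl_sq :: "nat \<Rightarrow> nat \<Rightarrow> real" where
  "cl_sq p i = (if i < p then -1 else 1)"

definition blade_sign :: "nat \<Rightarrow> nat set \<Rightarrow> nat set \<Rightarrow> real" where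
  "blade_sign p A B =
     (-1) ^ card {(a, b). a \<in> A \<and> b \<in> B \<and> b < a} * (\<Prod>i\<in>A \<inter> B. cl_sq p i)"

definition clifford :: "nat \<Rightarrow> nat \<Rightarrow> mv set" where
  "clifford p q = {x. \<forall>A. x A \<noteq> 0 \<longrightarrow> A \<subseteq> {0..<p+q}}"

definition cl_even :: "nat \<Rightarrow> nat \<Rightarrow> mv set" where
  "cl_even p q = {x. \<forall>A. x A \<noteq> 0 \<longrightarrow> A \<subseteq> {0..<p+q} \<and> even (card A)}"

definition cl_mult :: "nat \<Rightarrow> nat \<Rightarrow> mv \<Rightarrow> mv \<Rightarrow> mv" where
  "cl_mult p q x y = (\<lambda>C. \<Sum>A\<in>Pow {0..<p+q}. \<Sum>B\<in>Pow {0..<p+q}.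
       if (A - B) \<union> (B - A) = C then blade_sign p A B * x A * y B else 0)"

definition cl_one :: mv where
  "cl_one = (\<lambda>A. if A = {} then 1 else 0)"

definition cl_blade :: "nat set \<Rightarrow> mv" where
  "cl_blade S = (\<lambda>A. if A = S then 1 else 0)"

definition cl_vec :: "(nat \<Rightarrow> real) \<Rightarrow> mv" where
  "cl_vec v = (\<lambda>A. if card A = 1 then v (the_elem A) else 0)"

definition cl_prod :: "nat \<Rightarrow> nat \<Rightarrow> mv list \<Rightarrow> mv" where
  "cl_prod p q xs = foldr (cl_mult p q) xs cl_one"

text \<open>Pin of a subspace S of R^{p,q}: generated by the unit vectors of S
  (products of finite lists of unit vectors; this is already a group since the
  inverse of a unit vector is, up to sign, itself).\<close>
definition unit_vecs :: "nat \<Rightarrow> nat \<Rightarrow> (nat \<Rightarrow> real) set \<Rightarrow> (nat \<Rightarrow> real) set" where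
  "unit_vecs p q S = {v \<in> S. pq_inner p q v v = 1 \<or> pq_inner p q v v = -1}"

definition pin_group :: "nat \<Rightarrow> nat \<Rightarrow> (nat \<Rightarrow> real) set \<Rightarrow> mv set" where
  "pin_group p q S = {cl_prod p q (map cl_vec vs) | vs. set vs \<subseteq> unit_vecs p q S}"

definition spin_group :: "nat \<Rightarrow> nat \<Rightarrow> (nat \<Rightarrow> real) set \<Rightarrow> mv set" where
  "spin_group p q S = pin_group p q S \<inter> cl_even p q"

text \<open>The algebra embedding iota : Cl(R^{q,0}) -> Cl^0_{p,q} extending
  x |-> e_1...e_p x'; on blades iota(e_A) = prod_{k in A, increasing} (e_1...e_p e_{p+k}).\<close>
definition iota_blade :: "nat \<Rightarrow> nat \<Rightarrow> nat set \<Rightarrow> mv" where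
  "iota_blade p q A = cl_prod p q
     (map (\<lambda>k. cl_mult p q (cl_blade {0..<p}) (cl_vec (std_basis (p + k)))) (sorted_list_of_set A))"

definition iota :: "nat \<Rightarrow> nat \<Rightarrow> mv \<Rightarrow> mv" where
  "iota p q x = (\<lambda>C. \<Sum>A\<in>Pow {0..<q}. x A * iota_blade p q A C)"

definition Khat :: "nat \<Rightarrow> nat \<Rightarrow> mv set" where
  "Khat p q = {cl_mult p q s (iota p q g) | s g.
      s \<in> spin_group p q (Vspace p) \<and> g \<in> pin_group q 0 (Vspace q)}"

definition cl0_module :: "nat \<Rightarrow> nat \<Rightarrow> (mv \<Rightarrow> 'w::real_vector \<Rightarrow> 'w) \<Rightarrow> bool" where
  "cl0_module p q \<rho> \<longleftrightarrow>
     \<rho> cl_one = id \<and>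
     (\<forall>x\<in>cl_even p q. linear (\<rho> x)) \<and>
     (\<forall>x\<in>cl_even p q. \<forall>y\<in>cl_even p q. \<rho> (\<lambda>A. x A + y A) = (\<lambda>w. \<rho> x w + \<rho> y w)) \<and>
     (\<forall>x\<in>cl_even p q. \<forall>c. \<rho> (\<lambda>A. c * x A) = (\<lambda>w. c *\<^sub>R \<rho> x w)) \<and>
     (\<forall>x\<in>cl_even p q. \<forall>y\<in>cl_even p q. \<rho> (cl_mult p q x y) = \<rho> x \<circ> \<rho> y)"

text \<open>W (= UNIV) is irreducible under the action of the elements of X via \<rho>.\<close>
definition irreducible_under :: "mv set \<Rightarrow> (mv \<Rightarrow> 'w::real_vector \<Rightarrow> 'w) \<Rightarrow> bool" where
  "irreducible_under X \<rho> \<longleftrightarrow>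
     (\<exists>w::'w. w \<noteq> 0) \<and>
     (\<forall>U::'w set. subspace U \<and> (\<forall>x\<in>X. \<forall>u\<in>U. \<rho> x u \<in> U) \<longrightarrow> U = {0} \<or> U = UNIV)"

definition bilinear_form :: "('w::real_vector \<Rightarrow> 'w \<Rightarrow> real) \<Rightarrow> bool" where
  "bilinear_form \<beta> \<longleftrightarrow> (\<forall>s. linear (\<beta> s)) \<and> (\<forall>t. linear (\<lambda>s. \<beta> s t))"

definition sym_form :: "('w \<Rightarrow> 'w \<Rightarrow> real) \<Rightarrow> bool" where
  "sym_form \<beta> \<longleftrightarrow> (\<forall>s t. \<beta> s t = \<beta> t s)"

definition invariant_form :: "mv set \<Rightarrow> (mv \<Rightarrow> 'w \<Rightarrow> 'w) \<Rightarrow> ('w \<Rightarrow> 'w \<Rightarrow> real) \<Rightarrow> bool" where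
  "invariant_form X \<rho> \<beta> \<longleftrightarrow> (\<forall>k\<in>X. \<forall>s t. \<beta> (\<rho> k s) (\<rho> k t) = \<beta> s t)"

definition pos_def :: "('w::real_vector \<Rightarrow> 'w \<Rightarrow> real) \<Rightarrow> bool" where
  "pos_def \<beta> \<longleftrightarrow> (\<forall>s. s \<noteq> 0 \<longrightarrow> \<beta> s s > 0)"

definition neg_def :: "('w::real_vector \<Rightarrow> 'w \<Rightarrow> real) \<Rightarrow> bool" where
  "neg_def \<beta> \<longleftrightarrow> (\<forall>s. s \<noteq> 0 \<longrightarrow> \<beta> s s < 0)"

text \<open>A linear map \<wedge>^2 W -> V is represented (universal property) by an
  alternating bilinear map W x W -> V; V-valued maps are given componentwise.\<close>
definition wedge2_map :: "nat \<Rightarrow> nat \<Rightarrow> ('w::real_vector \<Rightarrow> 'w \<Rightarrow> nat \<Rightarrow> real) \<Rightarrow> bool" where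
  "wedge2_map p q Pm \<longleftrightarrow>
     (\<forall>s t. Pm s t \<in> Vspace (p + q)) \<and>
     (\<forall>i s. linear (\<lambda>t. Pm s t i)) \<and> (\<forall>i t. linear (\<lambda>s. Pm s t i)) \<and>
     (\<forall>s t. Pm s t = (\<lambda>i. - Pm t s i))"

definition so_act_V :: "nat \<Rightarrow> nat \<Rightarrow> (nat \<Rightarrow> real) \<Rightarrow> (nat \<Rightarrow> real) \<Rightarrow> (nat \<Rightarrow> real) \<Rightarrow> (nat \<Rightarrow> real)" where
  "so_act_V p q x y z = (\<lambda>i. pq_inner p q y z * x i - pq_inner p q x z * y i)"

definition so_act_W :: "nat \<Rightarrow> nat \<Rightarrow> (mv \<Rightarrow> 'w \<Rightarrow> 'w) \<Rightarrow> (nat \<Rightarrow> real) \<Rightarrow> (nat \<Rightarrow> real) \<Rightarrow> 'w \<Rightarrow> 'w" where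
  "so_act_W p q \<rho> x y = \<rho> (\<lambda>A. -(1/4) *
       (cl_mult p q (cl_vec x) (cl_vec y) A - cl_mult p q (cl_vec y) (cl_vec x) A))"

text \<open>o(V)-equivariance (o(V) = \<wedge>^2 V is spanned by the x\<wedge>y, x,y \<in> V; the action
  on \<wedge>^2 W is A(s\<wedge>t) = As\<wedge>t + s\<wedge>At).\<close>
definition so_equivariant :: "nat \<Rightarrow> nat \<Rightarrow> (mv \<Rightarrow> 'w::real_vector \<Rightarrow> 'w) \<Rightarrow> ('w \<Rightarrow> 'w \<Rightarrow> nat \<Rightarrow> real) \<Rightarrow> bool" where
  "so_equivariant p q \<rho> Pm \<longleftrightarrow>
     (\<forall>x\<in>Vspace (p+q). \<forall>y\<in>Vspace (p+q). \<forall>s t.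
        (\<lambda>i. Pm (so_act_W p q \<rho> x y s) t i + Pm s (so_act_W p q \<rho> x y t) i)
        = so_act_V p q x y (Pm s t))"

text \<open>b(\<Pi>)(s,t) = <e_1, \<Pi>(e_2...e_p s \<wedge> t)>\<close>
definition b_form :: "nat \<Rightarrow> nat \<Rightarrow> (mv \<Rightarrow> 'w \<Rightarrow> 'w) \<Rightarrow> ('w \<Rightarrow> 'w \<Rightarrow> nat \<Rightarrow> real) \<Rightarrow> 'w \<Rightarrow> 'w \<Rightarrow> real" where
  "b_form p q \<rho> Pm s t = pq_inner p q (std_basis 0) (Pm (\<rho> (cl_blade {1..<p}) s) t)"

end

theory Submission
  imports Defs "HOL-Computational_Algebra.Fundamental_Theorem_Algebra"
begin

text \<open>
  Write \<open>e\<^sub>A\<close> for the basis blades of \<open>Cl\<^sub>p\<^sub>,\<^sub>q\<close>. As \<open>p mod 4 = 3\<close>, the blade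
  \<open>\<Omega> = e\<^sub>0\<cdots>e\<^sub>p\<^sub>-\<^sub>1\<close> squares to \<open>1\<close> and anticommutes with the \<open>e\<^sub>p\<^sub>+\<^sub>k\<close>, so \<open>\<iota>\<close> is an
  algebra homomorphism into \<open>Cl\<^sup>0\<close> compatible with the transpose \<open>x \<mapsto> x\<^sup>T\<close> that inverts
  every blade. Splitting an even index set at \<open>p\<close> shows that every even blade is \<open>\<plusminus>k\<close>
  for some \<open>k \<in> Khat\<close>, while \<open>Khat \<subseteq> Cl\<^sup>0\<close> and \<open>k\<^sup>T k = 1\<close> on \<open>Khat\<close>. Hence
  \<open>Khat\<close> and \<open>Cl\<^sup>0\<close> have the same invariant subspaces, and a bilinear form is
  \<open>Khat\<close>-invariant iff it is invariant under all even blades.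

  Averaging an inner product over the even blades gives a positive definite invariant form
  \<open>g\<close>. Any symmetric invariant form is \<open>g(\<cdot>, M \<cdot>)\<close> for a \<open>g\<close>-self-adjoint \<open>M\<close>
  commuting with \<open>Cl\<^sup>0\<close>; \<open>M\<close> has a real eigenvalue, whose eigenspace is a submodule,
  so \<open>M\<close> is a scalar.

  Finally, \<open>e\<^sub>i \<and> e\<^sub>j\<close> acts on \<open>W\<close> as \<open>-\<onehalf> e\<^sub>i e\<^sub>j\<close>, and the \<open>o(V)\<close>-equivariance of \<open>\<Pi>\<close>
  determines \<open>\<Pi>(e\<^sub>A s, e\<^sub>A t)\<close> up to explicit signs for every even blade \<open>e\<^sub>A\<close>. This
  makes \<open>b(\<Pi>)\<close> invariant and, as \<open>(e\<^sub>2\<cdots>e\<^sub>p)\<^sup>2 = -1\<close>, symmetric. So \<open>b(\<Pi>) = c g\<close>, and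
  \<open>c = 0\<close> forces \<open>\<Pi> = 0\<close>, by equivariance once more.
\<close>

section \<open>Signs of products of basis blades\<close>

definition inversion_sign :: "nat set \<Rightarrow> nat set \<Rightarrow> real" where
  "inversion_sign A B = (\<Prod>a\<in>A. \<Prod>b\<in>B. if b < a then -1 else 1)"

definition square_sign :: "nat \<Rightarrow> nat set \<Rightarrow> real" where
  "square_sign p A = (\<Prod>i\<in>A. cl_sq p i)"

lemma blade_sign_factor:
  assumes "finite A" "finite B"
  shows "blade_sign p A B = inversion_sign A B * square_sign p (A \<inter> B)"
proof -
  let ?I = "{(a, b). a \<in> A \<and> b \<in> B \<and> b < a}"
  have "inversion_sign A B = (\<Prod>z\<in>A \<times> B. if snd z < fst z then -1 else 1)"
    unfolding inversion_sign_def by (simp add: prod.cartesian_product split_def)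
  also have "\<dots> = (-1) ^ card {z \<in> A \<times> B. snd z < fst z}"
    using assms by (simp add: prod.If_cases Int_def conj_commute)
  also have "{z \<in> A \<times> B. snd z < fst z} = ?I" by auto
  finally show ?thesis unfolding blade_sign_def square_sign_def by simp
qed

lemma prod_sym_diff:
  fixes f :: "'a \<Rightarrow> 'b::comm_monoid_mult"
  assumes "finite A" "finite B" and f_sq: "\<And>x. f x * f x = 1"
  shows "prod f (sym_diff A B) = prod f A * prod f B"
proof -
  have "prod f (A \<inter> B) * prod f (A \<inter> B) = 1"
    by (simp add: prod.distrib[symmetric] f_sq)
  then have "prod f A * prod f B = prod f (A - B) * prod f (B - A)"
    using prod.Int_Diff[OF assms(1), of f B] prod.Int_Diff[OF assms(2), of f A]
    by (simp add: Int_commute ac_simps)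
  also have "\<dots> = prod f (sym_diff A B)"
    using assms by (intro prod.union_disjoint[symmetric]) auto
  finally show ?thesis ..
qed

lemma cl_sq_square: "cl_sq p i * cl_sq p i = 1"
  by (simp add: cl_sq_def)

lemma inversion_sign_square: "inversion_sign A B * inversion_sign A B = 1"
  unfolding inversion_sign_def by (auto simp: prod.distrib[symmetric] intro!: prod.neutral)

lemma square_sign_square: "square_sign p A * square_sign p A = 1"
  unfolding square_sign_def by (simp add: prod.distrib[symmetric] cl_sq_square)

lemma inversion_sign_sym_diff_left:
  "finite A \<Longrightarrow> finite B \<Longrightarrow>
    inversion_sign (sym_diff A B) C = inversion_sign A C * inversion_sign B C"
  unfolding inversion_sign_def
  by (intro prod_sym_diff) (auto simp: prod.distrib[symmetric] intro!: prod.neutral)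

lemma inversion_sign_sym_diff_right:
  "finite B \<Longrightarrow> finite C \<Longrightarrow>
    inversion_sign A (sym_diff B C) = inversion_sign A B * inversion_sign A C"
  unfolding inversion_sign_def by (simp add: prod_sym_diff prod.distrib)

lemma square_sign_sym_diff:
  "finite A \<Longrightarrow> finite B \<Longrightarrow> square_sign p (sym_diff A B) = square_sign p A * square_sign p B"
  unfolding square_sign_def by (intro prod_sym_diff cl_sq_square)

lemma blade_sign_square:
  assumes "finite A" "finite B"
  shows "blade_sign p A B * blade_sign p A B = 1"
  using inversion_sign_square[of A B] square_sign_square[of p "A \<inter> B"]
  by (simp add: blade_sign_factor[OF assms] ac_simps)

lemma blade_sign_cocycle:
  assumes "finite A" "finite B" "finite C"
  shows "blade_sign p A B * blade_sign p (sym_diff A B) C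
       = blade_sign p A (sym_diff B C) * blade_sign p B C"
proof -
  have "sym_diff A B \<inter> C = sym_diff (A \<inter> C) (B \<inter> C)"
    and "A \<inter> sym_diff B C = sym_diff (A \<inter> B) (A \<inter> C)" by auto
  then show ?thesis
    using assms
    by (simp add: blade_sign_factor square_sign_sym_diff inversion_sign_sym_diff_left
        inversion_sign_sym_diff_right ac_simps)
qed

lemma inversion_sign_ordered: "(\<And>a b. a \<in> X \<Longrightarrow> b \<in> Y \<Longrightarrow> a \<le> b) \<Longrightarrow> inversion_sign X Y = 1"
  unfolding inversion_sign_def by (intro prod.neutral ballI) (auto simp: not_less)

lemma prod_if_eq:
  assumes "finite B"
  shows "(\<Prod>b\<in>B. if a = b then 1 else (-1::real)) = (-1) ^ card B * (if a \<in> B then -1 else 1)"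
proof -
  have "(\<Prod>b\<in>B. if a = b then 1 else (-1::real)) = (\<Prod>b\<in>B. -1 * (if a = b then -1 else 1))"
    by (intro prod.cong refl) auto
  also have "\<dots> = (-1) ^ card B * (if a \<in> B then -1 else 1)"
    using assms by (subst prod.distrib) (simp add: prod.delta)
  finally show ?thesis .
qed

lemma blade_sign_commute:
  assumes fA: "finite A" and fB: "finite B"
  shows "blade_sign p A B * blade_sign p B A = (-1) ^ (card A * card B) * (\<Prod>a\<in>A. if a \<in> B then -1 else 1)"
proof -
  have "inversion_sign A B * inversion_sign B A = (\<Prod>a\<in>A. \<Prod>b\<in>B. (if b < a then -1 else 1) * (if a < b then -1 else (1::real)))"
    unfolding inversion_sign_def by (simp add: prod.swap[of _ B A] prod.distrib)
  also have "\<dots> = (\<Prod>a\<in>A. \<Prod>b\<in>B. if a = b then 1 else -1)"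
    by (intro prod.cong refl) auto
  also have "\<dots> = (\<Prod>a\<in>A. (-1) ^ card B * (if a \<in> B then -1 else 1))"
    by (intro prod.cong refl prod_if_eq[OF fB])
  also have "\<dots> = (-1) ^ (card A * card B) * (\<Prod>a\<in>A. if a \<in> B then -1 else 1)"
    by (simp add: prod.distrib power_mult[symmetric] mult.commute)
  finally have i: "inversion_sign A B * inversion_sign B A = (-1) ^ (card A * card B) * (\<Prod>a\<in>A. if a \<in> B then -1 else 1)" .
  have q: "square_sign p (A \<inter> B) * square_sign p (B \<inter> A) = 1" by (simp add: Int_commute square_sign_square)
  have "blade_sign p A B * blade_sign p B A = (inversion_sign A B * inversion_sign B A) * (square_sign p (A \<inter> B) * square_sign p (B \<inter> A))"
    using fA fB by (simp add: blade_sign_factor ac_simps)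
  then show ?thesis using i q by simp
qed

section \<open>The Clifford product\<close>

lemma sum_eq_single:
  fixes f :: "'a \<Rightarrow> 'b::comm_monoid_add"
  assumes "finite S" "b \<in> S" "\<And>x. x \<in> S \<Longrightarrow> x \<noteq> b \<Longrightarrow> f x = 0"
  shows "sum f S = f b"
  using assms by (simp add: sum.remove sum.neutral)

lemma cl_mult_support:
  assumes "cl_mult p q x y C \<noteq> 0"
  shows "C \<subseteq> {0..<p+q}"
proof (rule ccontr)
  assume "\<not> C \<subseteq> {0..<p+q}"
  then have "\<forall>A\<in>Pow {0..<p+q}. \<forall>B\<in>Pow {0..<p+q}. sym_diff A B \<noteq> C" by auto
  then have "cl_mult p q x y C = 0" unfolding cl_mult_def by (intro sum.neutral) auto
  with assms show False by simp
qed

lemma cl_mult_in_clifford: "cl_mult p q x y \<in> clifford p q"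
  unfolding clifford_def using cl_mult_support by blast

lemma if_sum_mult_distrib:
  "(if P then a * (\<Sum>i\<in>I. f i) * b else 0) = (\<Sum>i\<in>I. if P then a * f i * b else (0::real))"
  by (cases P) (simp_all add: sum_distrib_left sum_distrib_right)

lemma if_mult_sum_distrib:
  "(if P then a * x * (\<Sum>i\<in>I. f i) else 0) = (\<Sum>i\<in>I. if P then a * x * f i else (0::real))"
  by (cases P) (simp_all add: sum_distrib_left sum_distrib_right)

lemma sum_swap_outer_pair:
  "(\<Sum>c\<in>S. \<Sum>e\<in>S. \<Sum>a\<in>S. \<Sum>b\<in>S. f c e a b) = (\<Sum>a\<in>S. \<Sum>b\<in>S. \<Sum>e\<in>S. \<Sum>c\<in>S. f c e a b)"
proof -
  have "(\<Sum>c\<in>S. \<Sum>e\<in>S. \<Sum>a\<in>S. \<Sum>b\<in>S. f c e a b) = (\<Sum>c\<in>S. \<Sum>a\<in>S. \<Sum>e\<in>S. \<Sum>b\<in>S. f c e a b)"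
    by (rule sum.cong[OF refl], rule sum.swap)
  also have "\<dots> = (\<Sum>a\<in>S. \<Sum>c\<in>S. \<Sum>e\<in>S. \<Sum>b\<in>S. f c e a b)"
    by (rule sum.swap)
  also have "\<dots> = (\<Sum>a\<in>S. \<Sum>c\<in>S. \<Sum>b\<in>S. \<Sum>e\<in>S. f c e a b)"
    by (rule sum.cong[OF refl], rule sum.cong[OF refl], rule sum.swap)
  also have "\<dots> = (\<Sum>a\<in>S. \<Sum>b\<in>S. \<Sum>c\<in>S. \<Sum>e\<in>S. f c e a b)"
    by (rule sum.cong[OF refl], rule sum.swap)
  also have "\<dots> = (\<Sum>a\<in>S. \<Sum>b\<in>S. \<Sum>e\<in>S. \<Sum>c\<in>S. f c e a b)"
    by (rule sum.cong[OF refl], rule sum.cong[OF refl], rule sum.swap)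
  finally show ?thesis .
qed

lemma sum_swap_second_last:
  "(\<Sum>a\<in>S. \<Sum>f\<in>S. \<Sum>b\<in>S. \<Sum>e\<in>S. g a f b e) = (\<Sum>a\<in>S. \<Sum>b\<in>S. \<Sum>e\<in>S. \<Sum>f\<in>S. g a f b e)"
proof -
  have "(\<Sum>a\<in>S. \<Sum>f\<in>S. \<Sum>b\<in>S. \<Sum>e\<in>S. g a f b e) = (\<Sum>a\<in>S. \<Sum>b\<in>S. \<Sum>f\<in>S. \<Sum>e\<in>S. g a f b e)"
    by (rule sum.cong[OF refl], rule sum.swap)
  also have "\<dots> = (\<Sum>a\<in>S. \<Sum>b\<in>S. \<Sum>e\<in>S. \<Sum>f\<in>S. g a f b e)"
    by (rule sum.cong[OF refl], rule sum.cong[OF refl], rule sum.swap)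
  finally show ?thesis .
qed

lemma cl_mult_mult_left:
  "cl_mult p q (cl_mult p q x y) z D =
    (\<Sum>A\<in>Pow {0..<p+q}. \<Sum>B\<in>Pow {0..<p+q}. \<Sum>E\<in>Pow {0..<p+q}. if sym_diff (sym_diff A B) E = D
       then blade_sign p (sym_diff A B) E * blade_sign p A B * x A * y B * z E else 0)"
  (is "_ = (\<Sum>A\<in>?P. \<Sum>B\<in>?P. \<Sum>E\<in>?P. ?t A B E)")
proof -
  have "cl_mult p q (cl_mult p q x y) z D =
    (\<Sum>C\<in>?P. \<Sum>E\<in>?P. \<Sum>A\<in>?P. \<Sum>B\<in>?P. if sym_diff C E = D then blade_sign p C E *
       (if sym_diff A B = C then blade_sign p A B * x A * y B else 0) * z E else 0)"
    unfolding cl_mult_def by (simp only: if_sum_mult_distrib)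
  also have "\<dots> = (\<Sum>A\<in>?P. \<Sum>B\<in>?P. \<Sum>E\<in>?P. \<Sum>C\<in>?P. if sym_diff C E = D then blade_sign p C E *
       (if sym_diff A B = C then blade_sign p A B * x A * y B else 0) * z E else 0)"
    by (rule sum_swap_outer_pair)
  also have "\<dots> = (\<Sum>A\<in>?P. \<Sum>B\<in>?P. \<Sum>E\<in>?P. \<Sum>C\<in>?P. if sym_diff A B = C then ?t A B E else 0)"
    by (intro sum.cong refl) auto
  also have "\<dots> = (\<Sum>A\<in>?P. \<Sum>B\<in>?P. \<Sum>E\<in>?P. ?t A B E)"
    by (intro sum.cong refl, subst sum.delta'[of ?P]) auto
  finally show ?thesis .
qed

lemma cl_mult_mult_right:
  "cl_mult p q x (cl_mult p q y z) D =
    (\<Sum>A\<in>Pow {0..<p+q}. \<Sum>B\<in>Pow {0..<p+q}. \<Sum>E\<in>Pow {0..<p+q}. if sym_diff A (sym_diff B E) = D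
       then blade_sign p A (sym_diff B E) * blade_sign p B E * x A * y B * z E else 0)"
  (is "_ = (\<Sum>A\<in>?P. \<Sum>B\<in>?P. \<Sum>E\<in>?P. ?t A B E)")
proof -
  have "cl_mult p q x (cl_mult p q y z) D =
    (\<Sum>A\<in>?P. \<Sum>F\<in>?P. \<Sum>B\<in>?P. \<Sum>E\<in>?P. if sym_diff A F = D then blade_sign p A F * x A *
       (if sym_diff B E = F then blade_sign p B E * y B * z E else 0) else 0)"
    unfolding cl_mult_def by (simp only: if_mult_sum_distrib)
  also have "\<dots> = (\<Sum>A\<in>?P. \<Sum>B\<in>?P. \<Sum>E\<in>?P. \<Sum>F\<in>?P. if sym_diff A F = D then blade_sign p A F * x A *
       (if sym_diff B E = F then blade_sign p B E * y B * z E else 0) else 0)"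
    by (rule sum_swap_second_last)
  also have "\<dots> = (\<Sum>A\<in>?P. \<Sum>B\<in>?P. \<Sum>E\<in>?P. \<Sum>F\<in>?P. if sym_diff B E = F then ?t A B E else 0)"
    by (intro sum.cong refl) auto
  also have "\<dots> = (\<Sum>A\<in>?P. \<Sum>B\<in>?P. \<Sum>E\<in>?P. ?t A B E)"
    by (intro sum.cong refl, subst sum.delta'[of ?P]) auto
  finally show ?thesis .
qed

lemma cl_mult_assoc: "cl_mult p q (cl_mult p q x y) z = cl_mult p q x (cl_mult p q y z)"
proof
  fix D
  have "blade_sign p (sym_diff A B) E * blade_sign p A B = blade_sign p A (sym_diff B E) * blade_sign p B E"
    if "A \<subseteq> {0..<p+q}" "B \<subseteq> {0..<p+q}" "E \<subseteq> {0..<p+q}" for A B E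
    using blade_sign_cocycle[of A B E p] that by (simp add: finite_subset mult.commute)
  moreover have "sym_diff (sym_diff A B) E = sym_diff A (sym_diff B E)" for A B E :: "nat set"
    by auto
  ultimately show "cl_mult p q (cl_mult p q x y) z D = cl_mult p q x (cl_mult p q y z) D"
    unfolding cl_mult_mult_left cl_mult_mult_right by (intro sum.cong refl) auto
qed

lemma cl_blade_mult:
  assumes "A \<subseteq> {0..<p+q}" "B \<subseteq> {0..<p+q}"
  shows "cl_mult p q (cl_blade A) (cl_blade B) = (\<lambda>C. blade_sign p A B * cl_blade (sym_diff A B) C)"
proof
  fix C
  have "cl_mult p q (cl_blade A) (cl_blade B) C =
     (\<Sum>B'\<in>Pow {0..<p+q}. if sym_diff A B' = C then blade_sign p A B' * cl_blade A A * cl_blade B B' else 0)"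
    unfolding cl_mult_def using assms
  proof (intro sum_eq_single)
    fix A' assume "A' \<in> Pow {0..<p+q}" "A' \<noteq> A"
    then show "(\<Sum>B'\<in>Pow {0..<p+q}. if sym_diff A' B' = C then blade_sign p A' B' * cl_blade A A' * cl_blade B B' else 0) = 0"
      by (intro sum.neutral) (simp add: cl_blade_def)
  qed auto
  also have "\<dots> = (if sym_diff A B = C then blade_sign p A B * cl_blade A A * cl_blade B B else 0)"
    using assms by (intro sum_eq_single) (auto simp: cl_blade_def)
  also have "\<dots> = blade_sign p A B * cl_blade (sym_diff A B) C"
    by (auto simp: cl_blade_def)
  finally show "cl_mult p q (cl_blade A) (cl_blade B) C = blade_sign p A B * cl_blade (sym_diff A B) C" .
qed

lemma cl_one_eq_blade: "cl_one = cl_blade {}"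
  unfolding cl_one_def cl_blade_def by simp

lemma cl_one_mult:
  assumes "x \<in> clifford p q"
  shows "cl_mult p q cl_one x = x"
proof
  fix C
  show "cl_mult p q cl_one x C = x C"
  proof (cases "C \<subseteq> {0..<p+q}")
    case True
    have "cl_mult p q cl_one x C = (\<Sum>B\<in>Pow {0..<p+q}. if sym_diff {} B = C then blade_sign p {} B * cl_one {} * x B else 0)"
      unfolding cl_mult_def
    proof (intro sum_eq_single)
      fix A' assume "A' \<in> Pow {0..<p+q}" "A' \<noteq> {}"
      then show "(\<Sum>B\<in>Pow {0..<p+q}. if sym_diff A' B = C then blade_sign p A' B * cl_one A' * x B else 0) = 0"
        by (intro sum.neutral) (simp add: cl_one_def)
    qed auto
    also have "\<dots> = x C"
      using True by (subst sum_eq_single[of _ C]) (auto simp: cl_one_def blade_sign_def)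
    finally show ?thesis .
  next
    case False
    then have "x C = 0" using assms by (auto simp: clifford_def)
    moreover have "cl_mult p q cl_one x C = 0" using cl_mult_support False by blast
    ultimately show ?thesis by simp
  qed
qed

lemma sum_rotate_3:
  "(\<Sum>a\<in>A. \<Sum>b\<in>B. \<Sum>i\<in>I. f a b i) = (\<Sum>i\<in>I. \<Sum>a\<in>A. \<Sum>b\<in>B. f a b i)"
proof -
  have "(\<Sum>a\<in>A. \<Sum>b\<in>B. \<Sum>i\<in>I. f a b i) = (\<Sum>a\<in>A. \<Sum>i\<in>I. \<Sum>b\<in>B. f a b i)"
    by (rule sum.cong[OF refl], rule sum.swap)
  also have "\<dots> = (\<Sum>i\<in>I. \<Sum>a\<in>A. \<Sum>b\<in>B. f a b i)" by (rule sum.swap)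
  finally show ?thesis .
qed

lemma cl_mult_sum_left:
  "cl_mult p q (\<lambda>A. \<Sum>i\<in>I. f i A) y = (\<lambda>C. \<Sum>i\<in>I. cl_mult p q (f i) y C)"
proof
  fix C
  have "cl_mult p q (\<lambda>A. \<Sum>i\<in>I. f i A) y C = (\<Sum>A\<in>Pow {0..<p+q}. \<Sum>B\<in>Pow {0..<p+q}. \<Sum>i\<in>I.
     if sym_diff A B = C then blade_sign p A B * f i A * y B else 0)"
    unfolding cl_mult_def by (simp only: if_sum_mult_distrib)
  also have "\<dots> = (\<Sum>i\<in>I. cl_mult p q (f i) y C)"
    unfolding cl_mult_def by (rule sum_rotate_3)
  finally show "cl_mult p q (\<lambda>A. \<Sum>i\<in>I. f i A) y C = (\<Sum>i\<in>I. cl_mult p q (f i) y C)" .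
qed

lemma cl_mult_sum_right:
  "cl_mult p q x (\<lambda>B. \<Sum>i\<in>I. f i B) = (\<lambda>C. \<Sum>i\<in>I. cl_mult p q x (f i) C)"
proof
  fix C
  have "cl_mult p q x (\<lambda>B. \<Sum>i\<in>I. f i B) C = (\<Sum>A\<in>Pow {0..<p+q}. \<Sum>B\<in>Pow {0..<p+q}. \<Sum>i\<in>I.
     if sym_diff A B = C then blade_sign p A B * x A * f i B else 0)"
    unfolding cl_mult_def by (simp only: if_mult_sum_distrib)
  also have "\<dots> = (\<Sum>i\<in>I. cl_mult p q x (f i) C)"
    unfolding cl_mult_def by (rule sum_rotate_3)
  finally show "cl_mult p q x (\<lambda>B. \<Sum>i\<in>I. f i B) C = (\<Sum>i\<in>I. cl_mult p q x (f i) C)" .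
qed

lemma cl_mult_scale_left: "cl_mult p q (\<lambda>A. c * x A) y = (\<lambda>C. c * cl_mult p q x y C)"
  unfolding cl_mult_def
  by (rule ext) (simp add: sum_distrib_left, intro sum.cong refl, simp add: ac_simps)

lemma cl_mult_scale_right: "cl_mult p q x (\<lambda>A. c * y A) = (\<lambda>C. c * cl_mult p q x y C)"
  unfolding cl_mult_def
  by (rule ext) (simp add: sum_distrib_left, intro sum.cong refl, simp add: ac_simps)

section \<open>The even subalgebra and the transpose\<close>

definition blade_sq :: "nat \<Rightarrow> nat set \<Rightarrow> real" where
  "blade_sq p A = blade_sign p A A"

text \<open>\<open>cl_transpose\<close> is the anti-involution sending each blade \<open>e\<^sub>A\<close> to its inverse
  \<open>blade_sq p A \<cdot> e\<^sub>A\<close>, i.e.\ the transpose of left multiplication for the inner product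
  in which the blades are orthonormal.\<close>

definition cl_transpose :: "nat \<Rightarrow> mv \<Rightarrow> mv" where
  "cl_transpose p x = (\<lambda>A. blade_sq p A * x A)"

lemma blade_sq_factor: "finite A \<Longrightarrow> blade_sq p A = inversion_sign A A * square_sign p A"
  unfolding blade_sq_def by (simp add: blade_sign_factor)

lemma blade_sq_square: "finite A \<Longrightarrow> blade_sq p A * blade_sq p A = 1"
  unfolding blade_sq_def by (rule blade_sign_square)

lemma blade_sq_sym_diff:
  assumes "finite A" "finite B"
  shows "blade_sq p (sym_diff A B) * blade_sign p A B = blade_sq p A * blade_sq p B * blade_sign p B A"
proof -
  have f: "finite (sym_diff A B)" using assms by auto
  have i: "inversion_sign (sym_diff A B) (sym_diff A B)
      = inversion_sign A A * inversion_sign A B * (inversion_sign B A * inversion_sign B B)"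
    using assms by (simp add: inversion_sign_sym_diff_left inversion_sign_sym_diff_right mult.assoc)
  have q: "square_sign p (sym_diff A B) = square_sign p A * square_sign p B"
    using assms by (rule square_sign_sym_diff)
  have "blade_sq p (sym_diff A B) * blade_sign p A B =
      (inversion_sign A A * square_sign p A) * (inversion_sign B B * square_sign p B) *
      (inversion_sign B A * square_sign p (B \<inter> A)) * (inversion_sign A B * inversion_sign A B)"
    unfolding blade_sq_factor[OF f] i q blade_sign_factor[OF assms] by (simp only: ac_simps Int_commute)
  also have "\<dots> = blade_sq p A * blade_sq p B * blade_sign p B A"
    using assms by (simp add: inversion_sign_square blade_sq_factor blade_sign_factor)
  finally show ?thesis .
qed

lemma cl_transpose_mult:
  "cl_transpose p (cl_mult p q x y) = cl_mult p q (cl_transpose p y) (cl_transpose p x)"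
proof
  fix C
  let ?P = "Pow {0..<p+q}"
  have "cl_transpose p (cl_mult p q x y) C = (\<Sum>A\<in>?P. \<Sum>B\<in>?P.
      if sym_diff A B = C then blade_sq p C * blade_sign p A B * x A * y B else 0)"
    unfolding cl_transpose_def cl_mult_def
    by (simp only: sum_distrib_left) (intro sum.cong refl, simp add: mult.assoc)
  also have "\<dots> = (\<Sum>A\<in>?P. \<Sum>B\<in>?P. if sym_diff B A = C
      then blade_sign p B A * (blade_sq p B * y B) * (blade_sq p A * x A) else 0)"
  proof (intro sum.cong refl)
    fix A B assume "A \<in> ?P" "B \<in> ?P"
    then have "finite A" "finite B" by (auto intro: finite_subset)
    then have "blade_sq p (sym_diff A B) * blade_sign p A B = blade_sq p A * blade_sq p B * blade_sign p B A"
      by (rule blade_sq_sym_diff)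
    moreover have "sym_diff B A = sym_diff A B" by auto
    ultimately show "(if sym_diff A B = C then blade_sq p C * blade_sign p A B * x A * y B else 0) =
        (if sym_diff B A = C then blade_sign p B A * (blade_sq p B * y B) * (blade_sq p A * x A) else 0)"
      by (auto simp: ac_simps)
  qed
  also have "\<dots> = cl_mult p q (cl_transpose p y) (cl_transpose p x) C"
    unfolding cl_mult_def cl_transpose_def by (rule sum.swap)
  finally show "cl_transpose p (cl_mult p q x y) C = cl_mult p q (cl_transpose p y) (cl_transpose p x) C" .
qed

lemma card_sym_diff:
  assumes "finite A" "finite B"
  shows "card (sym_diff A B) + 2 * card (A \<inter> B) = card A + card B"
proof -
  have "card (sym_diff A B) = card (A - B) + card (B - A)"
    using assms by (intro card_Un_disjoint) auto
  then show ?thesis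
    using card_Int_Diff[OF assms(1), of B] card_Int_Diff[OF assms(2), of A] by (simp add: Int_commute)
qed

lemma even_card_sym_diff:
  assumes "finite A" "finite B" "even (card A)" "even (card B)"
  shows "even (card (sym_diff A B))"
  using card_sym_diff[OF assms(1,2)] assms(3,4) by presburger

lemma cl_mult_even:
  assumes "x \<in> cl_even p q" "y \<in> cl_even p q"
  shows "cl_mult p q x y \<in> cl_even p q"
  unfolding cl_even_def
proof (intro CollectI allI impI)
  fix C assume "cl_mult p q x y C \<noteq> 0"
  then obtain A where "A \<in> Pow {0..<p+q}"
    "(\<Sum>B\<in>Pow {0..<p+q}. if sym_diff A B = C then blade_sign p A B * x A * y B else 0) \<noteq> 0"
    unfolding cl_mult_def by (rule sum.not_neutral_contains_not_neutral)
  then obtain B where "(if sym_diff A B = C then blade_sign p A B * x A * y B else 0) \<noteq> 0"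
    by (blast elim: sum.not_neutral_contains_not_neutral)
  then have "sym_diff A B = C" "x A \<noteq> 0" "y B \<noteq> 0" by (auto split: if_splits)
  then have "even (card A)" "even (card B)" "A \<subseteq> {0..<p+q}" "B \<subseteq> {0..<p+q}"
    using assms unfolding cl_even_def by auto
  then show "C \<subseteq> {0..<p+q} \<and> even (card C)"
    using \<open>sym_diff A B = C\<close> even_card_sym_diff finite_subset by blast
qed

lemma cl_even_imp_clifford: "x \<in> cl_even p q \<Longrightarrow> x \<in> clifford p q"
  unfolding cl_even_def clifford_def by auto

lemma cl_transpose_even: "x \<in> cl_even p q \<Longrightarrow> cl_transpose p x \<in> cl_even p q"
  unfolding cl_even_def cl_transpose_def by auto

lemma cl_one_even: "cl_one \<in> cl_even p q"
  unfolding cl_even_def cl_one_def by auto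

lemma cl_one_clifford: "cl_one \<in> clifford p q"
  unfolding clifford_def cl_one_def by auto

lemma cl_blade_even: "A \<subseteq> {0..<p+q} \<Longrightarrow> even (card A) \<Longrightarrow> cl_blade A \<in> cl_even p q"
  unfolding cl_even_def cl_blade_def by auto

lemma cl_transpose_one: "cl_transpose p cl_one = cl_one"
  unfolding cl_transpose_def cl_one_def blade_sq_def blade_sign_def by auto

section \<open>Vectors and the Pin group of a positive definite subspace\<close>

lemma cl_vec_std_basis: "cl_vec (std_basis i) = cl_blade {i}"
proof
  fix A
  show "cl_vec (std_basis i) A = cl_blade {i} A"
  proof (cases "card A = 1")
    case True
    then obtain j where "A = {j}" by (auto simp: card_Suc_eq)
    then show ?thesis by (auto simp: cl_vec_def std_basis_def cl_blade_def)
  next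
    case False
    then show ?thesis by (auto simp: cl_vec_def cl_blade_def)
  qed
qed

lemma cl_vec_expand:
  assumes "v \<in> Vspace n"
  shows "cl_vec v = (\<lambda>A. \<Sum>i<n. v i * cl_blade {i} A)"
proof
  fix A
  show "cl_vec v A = (\<Sum>i<n. v i * cl_blade {i} A)"
  proof (cases "card A = 1")
    case True
    then obtain j where j: "A = {j}" by (auto simp: card_Suc_eq)
    show ?thesis
    proof (cases "j < n")
      case True
      then have "(\<Sum>i<n. v i * cl_blade {i} A) = v j * cl_blade {j} A"
        using j by (intro sum_eq_single) (auto simp: cl_blade_def)
      then show ?thesis using j by (simp add: cl_vec_def cl_blade_def)
    next
      case False
      then have "v j = 0" using assms by (simp add: Vspace_def)
      moreover have "(\<Sum>i<n. v i * cl_blade {i} A) = 0"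
        using j False by (intro sum.neutral) (auto simp: cl_blade_def)
      ultimately show ?thesis using j by (simp add: cl_vec_def)
    qed
  next
    case False
    then have "\<forall>i. cl_blade {i} A = 0" by (auto simp: cl_blade_def)
    then show ?thesis using False by (simp add: cl_vec_def)
  qed
qed

lemma sum_antisym_zero:
  assumes "\<And>i j. i \<in> S \<Longrightarrow> j \<in> S \<Longrightarrow> f i j = - f j i"
  shows "(\<Sum>i\<in>S. \<Sum>j\<in>S. f i j) = (0::real)"
proof -
  have "(\<Sum>i\<in>S. \<Sum>j\<in>S. f i j) = (\<Sum>j\<in>S. \<Sum>i\<in>S. f i j)" by (rule sum.swap)
  also have "\<dots> = (\<Sum>j\<in>S. \<Sum>i\<in>S. - f j i)" by (intro sum.cong refl assms)
  also have "\<dots> = - (\<Sum>j\<in>S. \<Sum>i\<in>S. f j i)" by (simp add: sum_negf)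
  finally have "(\<Sum>i\<in>S. \<Sum>j\<in>S. f i j) = - (\<Sum>j\<in>S. \<Sum>i\<in>S. f j i)" .
  then show ?thesis by linarith
qed

lemma blade_sign_singletons: "blade_sign p {i} {j} = (if i = j then cl_sq p i else if j < i then -1 else 1)"
proof (cases "i = j")
  case True
  then have "{(a, b). a \<in> {i} \<and> b \<in> {j} \<and> b < a} = {}" by auto
  then show ?thesis using True unfolding blade_sign_def by (simp only:) simp
next
  case False
  then have i: "{i} \<inter> {j} = {}" by auto
  show ?thesis
  proof (cases "j < i")
    case True
    then have "{(a, b). a \<in> {i} \<and> b \<in> {j} \<and> b < a} = {(i,j)}" by auto
    then show ?thesis using True False i unfolding blade_sign_def by (simp only:) simp
  next
    case F2: False
    then have "{(a, b). a \<in> {i} \<and> b \<in> {j} \<and> b < a} = {}" by auto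
    then show ?thesis using F2 False i unfolding blade_sign_def by (simp only:) simp
  qed
qed

lemma cl_vec_square:
  assumes "u \<in> Vspace (p+q)"
  shows "cl_mult p q (cl_vec u) (cl_vec u) = (\<lambda>C. - pq_inner p q u u * cl_one C)"
proof
  fix C
  let ?n = "p+q"
  let ?T = "\<lambda>i j. u i * u j * (blade_sign p {i} {j} * cl_blade (sym_diff {i} {j}) C)"
  have sub: "\<And>i. i < ?n \<Longrightarrow> {i} \<subseteq> {0..<p+q}" by auto
  have "cl_mult p q (cl_vec u) (cl_vec u) C = (\<Sum>i<?n. \<Sum>j<?n. ?T i j)"
    unfolding cl_vec_expand[OF assms] cl_mult_sum_left cl_mult_sum_right cl_mult_scale_left cl_mult_scale_right
    by (intro sum.cong refl) (simp add: cl_blade_mult sub mult.assoc)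
  also have "\<dots> = (\<Sum>i<?n. \<Sum>j<?n. (if i = j then ?T i j else 0) + (if i = j then 0 else ?T i j))"
    by (intro sum.cong refl) auto
  also have "\<dots> = (\<Sum>i<?n. \<Sum>j<?n. if i = j then ?T i j else 0) + (\<Sum>i<?n. \<Sum>j<?n. if i = j then 0 else ?T i j)"
    by (simp add: sum.distrib)
  also have "(\<Sum>i<?n. \<Sum>j<?n. if i = j then 0 else ?T i j) = 0"
  proof (rule sum_antisym_zero)
    fix i j show "(if i = j then 0 else ?T i j) = - (if j = i then 0 else ?T j i)"
      by (auto simp: blade_sign_singletons Un_commute)
  qed
  also have "(\<Sum>i<?n. \<Sum>j<?n. if i = j then ?T i j else 0) = (\<Sum>i<?n. ?T i i)"
    by (intro sum.cong refl) (simp add: sum.delta)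
  also have "\<dots> = (\<Sum>i<?n. cl_sq p i * (u i * u i)) * cl_one C"
    unfolding sum_distrib_right by (intro sum.cong refl) (simp add: blade_sign_singletons cl_one_eq_blade)
  also have "(\<Sum>i<?n. cl_sq p i * (u i * u i)) = - pq_inner p q u u"
  proof -
    have "{..<?n} = {..<p} \<union> {p..<p+q}" by auto
    then have "(\<Sum>i<?n. cl_sq p i * (u i * u i)) = (\<Sum>i<p. cl_sq p i * (u i * u i)) + (\<Sum>i\<in>{p..<p+q}. cl_sq p i * (u i * u i))"
      by (simp add: sum.union_disjoint ivl_disj_int)
    also have "\<dots> = - (\<Sum>i<p. u i * u i) + (\<Sum>i\<in>{p..<p+q}. u i * u i)"
      by (simp add: cl_sq_def sum_negf)
    finally show ?thesis unfolding pq_inner_def by simp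
  qed
  finally show "cl_mult p q (cl_vec u) (cl_vec u) C = - pq_inner p q u u * cl_one C" by simp
qed

lemma cl_transpose_vec:
  assumes "u \<in> Vspace p"
  shows "cl_transpose p (cl_vec u) = (\<lambda>A. (-1) * cl_vec u A)"
proof
  fix A
  show "cl_transpose p (cl_vec u) A = (-1) * cl_vec u A"
  proof (cases "card A = 1")
    case True
    then obtain j where j: "A = {j}" by (auto simp: card_Suc_eq)
    show ?thesis
    proof (cases "j < p")
      case True
      then show ?thesis using j by (simp add: cl_transpose_def blade_sq_def blade_sign_singletons cl_sq_def)
    next
      case False
      then have "u j = 0" using assms unfolding Vspace_def by simp
      then show ?thesis using j by (simp add: cl_transpose_def cl_vec_def)
    qed
  next
    case False
    then show ?thesis by (simp add: cl_transpose_def cl_vec_def)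
  qed
qed

lemma Vspace_mono: "u \<in> Vspace p \<Longrightarrow> p \<le> n \<Longrightarrow> u \<in> Vspace n"
  unfolding Vspace_def by auto

lemma unit_vecs_inner_one:
  assumes "u \<in> unit_vecs p q (Vspace p)"
  shows "pq_inner p q u u = 1"
proof -
  have u: "u \<in> Vspace p" using assms by (simp add: unit_vecs_def)
  have "(\<Sum>i\<in>{p..<p+q}. u i * u i) = 0" using u by (intro sum.neutral) (auto simp: Vspace_def)
  then have e: "pq_inner p q u u = (\<Sum>i<p. u i * u i)" by (simp add: pq_inner_def)
  have "(\<Sum>i<p. u i * u i) \<ge> 0" by (intro sum_nonneg) simp
  then show ?thesis using assms e by (auto simp: unit_vecs_def)
qed

lemma cl_transpose_unit_vec_mult:
  assumes "u \<in> unit_vecs p q (Vspace p)"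
  shows "cl_mult p q (cl_transpose p (cl_vec u)) (cl_vec u) = cl_one"
proof -
  have u: "u \<in> Vspace p" using assms by (simp add: unit_vecs_def)
  then have u2: "u \<in> Vspace (p+q)" by (rule Vspace_mono) simp
  show ?thesis
    unfolding cl_transpose_vec[OF u] cl_mult_scale_left cl_vec_square[OF u2] unit_vecs_inner_one[OF assms]
    by simp
qed

lemma cl_prod_clifford: "cl_prod p q xs \<in> clifford p q"
  by (cases xs) (auto simp: cl_prod_def cl_one_clifford cl_mult_in_clifford)

lemma cl_prod_Cons: "cl_prod p q (x # xs) = cl_mult p q x (cl_prod p q xs)"
  by (simp add: cl_prod_def)

lemma cl_transpose_prod_mult:
  assumes "\<And>x. x \<in> set xs \<Longrightarrow> cl_mult p q (cl_transpose p x) x = cl_one"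
  shows "cl_mult p q (cl_transpose p (cl_prod p q xs)) (cl_prod p q xs) = cl_one"
  using assms
proof (induction xs)
  case Nil
  then show ?case by (simp add: cl_prod_def cl_transpose_one cl_one_mult cl_one_clifford)
next
  case (Cons x xs)
  let ?X = "cl_prod p q xs"
  have IH: "cl_mult p q (cl_transpose p ?X) ?X = cl_one" using Cons by simp
  have hx: "cl_mult p q (cl_transpose p x) x = cl_one" using Cons by simp
  have "cl_mult p q (cl_transpose p (cl_prod p q (x # xs))) (cl_prod p q (x # xs))
      = cl_mult p q (cl_mult p q (cl_transpose p ?X) (cl_transpose p x)) (cl_mult p q x ?X)"
    by (simp add: cl_prod_Cons cl_transpose_mult)
  also have "\<dots> = cl_mult p q (cl_transpose p ?X) (cl_mult p q (cl_mult p q (cl_transpose p x) x) ?X)"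
    by (simp add: cl_mult_assoc)
  also have "\<dots> = cl_one" by (simp add: hx cl_one_mult cl_prod_clifford IH)
  finally show ?case .
qed

lemma pin_transpose_mult:
  assumes "g \<in> pin_group p q (Vspace p)"
  shows "cl_mult p q (cl_transpose p g) g = cl_one"
proof -
  obtain vs where g: "g = cl_prod p q (map cl_vec vs)" and vs: "set vs \<subseteq> unit_vecs p q (Vspace p)"
    using assms unfolding pin_group_def by blast
  show ?thesis unfolding g
    by (rule cl_transpose_prod_mult) (use vs cl_transpose_unit_vec_mult in auto)
qed

lemma sorted_list_of_set_insert_min:
  assumes "finite A" "\<forall>a\<in>A. b < a"
  shows "sorted_list_of_set (insert b A) = b # sorted_list_of_set A"
proof -
  have "b \<notin> A" using assms by auto
  then have "sorted_list_of_set (insert b A) = insort b (sorted_list_of_set A)"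
    using assms by (simp add: sorted_list_of_set_insert)
  also have "\<dots> = b # sorted_list_of_set A"
    using assms by (intro insort_is_Cons) (auto simp: less_imp_le)
  finally show ?thesis .
qed

lemma cl_prod_std_basis:
  assumes "finite S" "S \<subseteq> {0..<p+q}"
  shows "cl_prod p q (map (\<lambda>i. cl_vec (std_basis i)) (sorted_list_of_set S)) = cl_blade S"
  using assms
proof (induction S rule: finite_linorder_min_induct)
  case empty
  then show ?case by (simp add: cl_prod_def cl_one_eq_blade)
next
  case (insert b A)
  have s: "{b} \<subseteq> {0..<p+q}" "A \<subseteq> {0..<p+q}" using insert by auto
  have bs: "blade_sign p {b} A = 1"
  proof -
    have "inversion_sign {b} A = 1" using insert by (intro inversion_sign_ordered) (auto simp: less_imp_le)
    moreover have "{b} \<inter> A = {}" using insert by auto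
    ultimately show ?thesis using insert by (simp add: blade_sign_factor square_sign_def)
  qed
  have e: "sym_diff {b} A = insert b A" using insert by auto
  have "cl_prod p q (map (\<lambda>i. cl_vec (std_basis i)) (sorted_list_of_set (insert b A)))
      = cl_mult p q (cl_blade {b}) (cl_blade A)"
  proof -
    have "sorted_list_of_set (insert b A) = b # sorted_list_of_set A"
      using insert by (intro sorted_list_of_set_insert_min) auto
    then show ?thesis using insert s by (simp only: list.map cl_prod_Cons cl_vec_std_basis)
  qed
  also have "\<dots> = cl_blade (insert b A)"
    unfolding cl_blade_mult[OF s] bs e by simp
  finally show ?case .
qed

lemma std_basis_unit_vec:
  assumes "i < p"
  shows "std_basis i \<in> unit_vecs p q (Vspace p)"
proof -
  have v: "std_basis i \<in> Vspace p" using assms by (auto simp: Vspace_def std_basis_def)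
  have "(\<Sum>j<p. std_basis i j * std_basis i j) = 1"
    using assms by (subst sum_eq_single[of _ i]) (auto simp: std_basis_def)
  moreover have "(\<Sum>j\<in>{p..<p+q}. std_basis i j * std_basis i j) = 0"
    using assms by (intro sum.neutral) (auto simp: std_basis_def)
  ultimately have "pq_inner p q (std_basis i) (std_basis i) = 1" by (simp add: pq_inner_def)
  then show ?thesis using v by (simp add: unit_vecs_def)
qed

lemma cl_blade_pin:
  assumes "S \<subseteq> {0..<p}"
  shows "cl_blade S \<in> pin_group p q (Vspace p)"
proof -
  have f: "finite S" using assms finite_subset by auto
  have "cl_blade S = cl_prod p q (map cl_vec (map std_basis (sorted_list_of_set S)))"
  proof -
    have "S \<subseteq> {0..<p+q}" using assms by auto
    then have "cl_prod p q (map (\<lambda>i. cl_vec (std_basis i)) (sorted_list_of_set S)) = cl_blade S"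
      by (rule cl_prod_std_basis[OF f])
    then show ?thesis by (simp add: comp_def)
  qed
  moreover have "set (map std_basis (sorted_list_of_set S)) \<subseteq> unit_vecs p q (Vspace p)"
    using assms f std_basis_unit_vec by auto
  ultimately show ?thesis unfolding pin_group_def by blast
qed

section \<open>The embedding \<open>\<iota>\<close> of \<open>Cl(\<real>\<^sup>q)\<close> into the even subalgebra\<close>

definition reversal_sign :: "nat \<Rightarrow> real" where
  "reversal_sign n = (-1) ^ (n * (n - 1) div 2)"

lemma reversal_sign_Suc: "reversal_sign (Suc n) = reversal_sign n * (-1) ^ n"
proof -
  have "Suc n * n div 2 = n * (n - 1) div 2 + n"
  proof (cases n)
    case 0 then show ?thesis by simp
  next
    case (Suc m)
    have "Suc n * n = n * (n - 1) + 2 * n" using Suc by (simp add: algebra_simps)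
    then show ?thesis by simp
  qed
  then show ?thesis unfolding reversal_sign_def by (simp add: power_add)
qed

lemma reversal_sign_add: "reversal_sign (m + n) = reversal_sign m * reversal_sign n * (-1) ^ (m * n)"
proof (induction n)
  case 0 then show ?case by (simp add: reversal_sign_def)
next
  case (Suc n)
  have "reversal_sign (m + Suc n) = reversal_sign (m + n) * (-1) ^ (m + n)" by (simp add: reversal_sign_Suc)
  also have "\<dots> = reversal_sign m * (reversal_sign n * (-1) ^ n) * (-1) ^ (m * Suc n)"
    using Suc by (simp add: power_add ac_simps)
  also have "\<dots> = reversal_sign m * reversal_sign (Suc n) * (-1) ^ (m * Suc n)" by (simp add: reversal_sign_Suc)
  finally show ?case .
qed

lemma reversal_sign_square: "reversal_sign n * reversal_sign n = 1"
  unfolding reversal_sign_def by (simp add: power_mult_distrib[symmetric])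

lemma reversal_sign_double: "reversal_sign (c + c) = (-1) ^ c"
proof -
  have "(-1::real) ^ (c * c) = (-1) ^ c" by (simp add: minus_one_power_iff)
  then show ?thesis using reversal_sign_add[of c c] reversal_sign_square[of c] by simp
qed

lemma reversal_sign_3mod4: "p mod 4 = 3 \<Longrightarrow> reversal_sign p = -1"
proof -
  assume h: "p mod 4 = 3"
  then obtain k where k: "p = 4 * k + 3" by (metis div_mult_mod_eq add.commute mult.commute)
  have "p * (p - 1) = 2 * ((4 * k + 3) * (2 * k + 1))" using k by (simp add: algebra_simps)
  then have "p * (p - 1) div 2 = (4 * k + 3) * (2 * k + 1)" by simp
  moreover have "odd ((4 * k + 3) * (2 * k + 1))" by simp
  ultimately show ?thesis unfolding reversal_sign_def by (simp add: minus_one_power_iff)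
qed

text \<open>\<open>\<iota>(e\<^sub>A) = iota_coeff A \<cdot> e\<^bsub>iota_set p A\<^esub>\<close>: with \<open>\<Omega> = e\<^sub>0\<cdots>e\<^sub>p\<^sub>-\<^sub>1\<close>, the product of
  the generators \<open>\<Omega> e\<^sub>p\<^sub>+\<^sub>k\<close> (\<open>k \<in> A\<close> increasing) reorders to
  \<open>reversal_sign n \<cdot> \<Omega>\<^sup>n e\<^sub>p\<^sub>+\<^sub>A\<close> where \<open>n = card A\<close>, because \<open>\<Omega>\<close> anticommutes with each
  \<open>e\<^sub>p\<^sub>+\<^sub>k\<close> (\<open>p\<close> odd), and \<open>\<Omega>\<^sup>2 = 1\<close> for \<open>p mod 4 = 3\<close>.\<close>

definition iota_set :: "nat \<Rightarrow> nat set \<Rightarrow> nat set" where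
  "iota_set p A = ((+) p ` A) \<union> (if odd (card A) then {0..<p} else {})"

definition iota_coeff :: "nat set \<Rightarrow> real" where
  "iota_coeff A = reversal_sign (card A)"

lemma inversion_sign_shift: "inversion_sign ((+) p ` A) ((+) p ` B) = inversion_sign A B"
  unfolding inversion_sign_def by (simp add: prod.reindex inj_on_def)

lemma inversion_sign_shift_initial:
  assumes "finite A"
  shows "inversion_sign ((+) p ` A) {0..<p} = (-1) ^ (card A * p)"
proof -
  have "inversion_sign ((+) p ` A) {0..<p} = (\<Prod>a\<in>A. \<Prod>b\<in>{0..<p}. (if b < p + a then -1 else 1))"
    unfolding inversion_sign_def by (simp add: prod.reindex inj_on_def)
  also have "\<dots> = (\<Prod>a\<in>A. (-1) ^ p)" by (intro prod.cong refl) simp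
  also have "\<dots> = (-1) ^ (card A * p)" by (simp add: power_mult[symmetric] mult.commute)
  finally show ?thesis .
qed

lemma inversion_sign_initial: "inversion_sign {0..<p} {0..<p} = reversal_sign p"
proof (induction p)
  case 0
  then show ?case by (simp add: inversion_sign_def reversal_sign_def)
next
  case (Suc p)
  have e: "{0..<Suc p} = insert p {0..<p}" by auto
  have "inversion_sign {0..<Suc p} {0..<Suc p} = (\<Prod>b\<in>{0..<Suc p}. if b < p then -1 else 1) *
      (\<Prod>a\<in>{0..<p}. \<Prod>b\<in>{0..<Suc p}. if b < a then -1 else 1)"
    unfolding inversion_sign_def by (subst e) simp
  also have "(\<Prod>b\<in>{0..<Suc p}. if b < p then -1 else (1::real)) = (-1) ^ p"
    unfolding e by simp
  also have "(\<Prod>a\<in>{0..<p}. \<Prod>b\<in>{0..<Suc p}. if b < a then -1 else (1::real))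
      = inversion_sign {0..<p} {0..<p}"
    unfolding inversion_sign_def by (rule prod.cong[OF refl]) (simp add: e)
  finally show ?case using Suc by (simp add: reversal_sign_Suc)
qed

lemma square_sign_initial: "square_sign p {0..<p} = (-1) ^ p"
  unfolding square_sign_def cl_sq_def by simp

lemma square_sign_shift: "square_sign p ((+) p ` A) = 1"
  unfolding square_sign_def cl_sq_def by (intro prod.neutral) auto

lemma square_sign_positive: "A \<subseteq> {0..<q} \<Longrightarrow> square_sign q A = (-1) ^ card A"
  unfolding square_sign_def cl_sq_def by (subst prod.cong[OF refl, of _ _ "\<lambda>_. -1"]) auto

lemma iota_set_sym_diff:
  assumes "finite A" "finite B"
  shows "sym_diff (iota_set p A) (iota_set p B) = iota_set p (sym_diff A B)"
proof -
  have sh: "sym_diff ((+) p ` A) ((+) p ` B) = (+) p ` (sym_diff A B)" by auto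
  have par: "odd (card (sym_diff A B)) \<longleftrightarrow> (odd (card A) \<noteq> odd (card B))"
    using card_sym_diff[OF assms] by presburger
  have dis: "\<And>X. (+) p ` X \<inter> {0..<p} = {}" by auto
  show ?thesis unfolding iota_set_def using par dis sh by (auto split: if_splits)
qed

lemma iota_set_subset: "A \<subseteq> {0..<q} \<Longrightarrow> iota_set p A \<subseteq> {0..<p+q}"
  unfolding iota_set_def by auto

lemma even_card_iota_set:
  assumes "finite A" "odd p"
  shows "even (card (iota_set p A))"
proof -
  have "card (iota_set p A) = card A + (if odd (card A) then p else 0)"
    unfolding iota_set_def using assms
    by (subst card_Un_disjoint) (auto simp: card_image inj_on_def)
  then show ?thesis using assms by auto
qed

lemma reversal_sign_arith:
  assumes "a + b = s + 2 * c" "odd p"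
  shows "reversal_sign a * reversal_sign b * (if odd b then (-1) ^ (a * p) else 1) = (-1) ^ c * reversal_sign s"
proof -
  have e1: "(if odd b then (-1::real) ^ (a * p) else 1) = (-1) ^ (a * b)"
    using assms(2) by (auto simp: minus_one_power_iff)
  have "reversal_sign (a + b) = reversal_sign a * reversal_sign b * (-1) ^ (a * b)" by (rule reversal_sign_add)
  moreover have "reversal_sign (a + b) = reversal_sign s * (-1) ^ c"
  proof -
    have "reversal_sign (a + b) = reversal_sign (s + (c + c))" using assms(1) by (simp add: mult_2)
    also have "\<dots> = reversal_sign s * reversal_sign (c + c) * (-1) ^ (s * (c + c))" by (rule reversal_sign_add)
    also have "\<dots> = reversal_sign s * (-1) ^ c" by (simp add: reversal_sign_double minus_one_power_iff)
    finally show ?thesis .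
  qed
  ultimately show ?thesis using e1 by (simp add: ac_simps)
qed

lemma blade_sign_iota_set:
  assumes p3: "p mod 4 = 3" and A: "A \<subseteq> {0..<q}" and B: "B \<subseteq> {0..<q}"
  shows "blade_sign p (iota_set p A) (iota_set p B)
       = inversion_sign A B * (if odd (card B) then (-1) ^ (card A * p) else 1)"
proof -
  have fA: "finite A" and fB: "finite B" using A B finite_subset by auto
  define SA where "SA = (+) p ` A"
  define SB where "SB = (+) p ` B"
  define OA where "OA = (if odd (card A) then {0..<p} else ({}::nat set))"
  define OB where "OB = (if odd (card B) then {0..<p} else ({}::nat set))"
  have fin: "finite SA" "finite SB" "finite OA" "finite OB"
    using fA fB by (auto simp: SA_def SB_def OA_def OB_def)
  have TA: "iota_set p A = sym_diff SA OA" and TB: "iota_set p B = sym_diff SB OB"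
    unfolding iota_set_def SA_def OA_def SB_def OB_def by auto
  have "iota_set p A \<inter> iota_set p B = sym_diff (SA \<inter> SB) (OA \<inter> OB)"
    unfolding iota_set_def SA_def OA_def SB_def OB_def by auto
  then have Q: "square_sign p (iota_set p A \<inter> iota_set p B) = square_sign p (SA \<inter> SB) * square_sign p (OA \<inter> OB)"
    using fin by (simp add: square_sign_sym_diff)
  have "SA \<inter> SB = (+) p ` (A \<inter> B)" unfolding SA_def SB_def by auto
  then have q1: "square_sign p (SA \<inter> SB) = 1" by (simp add: square_sign_shift)
  have i1: "inversion_sign SA SB = inversion_sign A B"
    unfolding SA_def SB_def by (rule inversion_sign_shift)
  have i2: "inversion_sign OA SB = 1"
    unfolding OA_def SB_def by (intro inversion_sign_ordered) (auto split: if_splits)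
  have i3: "inversion_sign SA OB = (if odd (card B) then (-1) ^ (card A * p) else 1)"
    unfolding SA_def OB_def using inversion_sign_shift_initial[OF fA, of p] by (simp add: inversion_sign_def)
  have i4: "inversion_sign OA OB * square_sign p (OA \<inter> OB) = 1"
  proof (cases "odd (card A) \<and> odd (card B)")
    case True
    moreover have "odd p" using p3 by presburger
    ultimately show ?thesis
      unfolding OA_def OB_def using reversal_sign_3mod4[OF p3]
      by (simp add: inversion_sign_initial square_sign_initial)
  next
    case False
    then have "OA = {} \<or> OB = {}" unfolding OA_def OB_def by auto
    then show ?thesis by (auto simp: inversion_sign_def square_sign_def)
  qed
  have fT: "finite (iota_set p A)" "finite (iota_set p B)" using fin TA TB by auto
  have "blade_sign p (iota_set p A) (iota_set p B) = inversion_sign A B *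
      (if odd (card B) then (-1) ^ (card A * p) else 1) * (inversion_sign OA OB * square_sign p (OA \<inter> OB))"
    unfolding blade_sign_factor[OF fT] Q q1 unfolding TA TB using fin i1 i2 i3
    by (simp add: inversion_sign_sym_diff_left inversion_sign_sym_diff_right ac_simps)
  then show ?thesis unfolding i4 by simp
qed

lemma iota_coeff_mult:
  assumes p3: "p mod 4 = 3" and A: "A \<subseteq> {0..<q}" and B: "B \<subseteq> {0..<q}"
  shows "iota_coeff A * iota_coeff B * blade_sign p (iota_set p A) (iota_set p B)
       = blade_sign q A B * iota_coeff (sym_diff A B)"
proof -
  have fA: "finite A" and fB: "finite B" using A B finite_subset by auto
  have "odd p" using p3 by presburger
  have "square_sign q (A \<inter> B) = (-1) ^ card (A \<inter> B)" using A by (intro square_sign_positive) auto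
  then have bq: "blade_sign q A B = inversion_sign A B * (-1) ^ card (A \<inter> B)"
    using fA fB by (simp add: blade_sign_factor)
  have "card A + card B = card (sym_diff A B) + 2 * card (A \<inter> B)"
    using card_sym_diff[OF fA fB] by simp
  from reversal_sign_arith[OF this \<open>odd p\<close>]
  show ?thesis
    unfolding blade_sign_iota_set[OF assms] bq iota_coeff_def by (simp add: ac_simps)
qed

lemma cl_mult_scaled_blades:
  assumes "X \<subseteq> {0..<p+q}" "Y \<subseteq> {0..<p+q}"
  shows "cl_mult p q (\<lambda>C. a * cl_blade X C) (\<lambda>C. b * cl_blade Y C) = (\<lambda>C. a * b * blade_sign p X Y * cl_blade (sym_diff X Y) C)"
  unfolding cl_mult_scale_left cl_mult_scale_right cl_blade_mult[OF assms] by (simp add: ac_simps)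

lemma iota_generator:
  assumes "b < q"
  shows "cl_mult p q (cl_blade {0..<p}) (cl_vec (std_basis (p + b))) = (\<lambda>C. iota_coeff {b} * cl_blade (iota_set p {b}) C)"
proof -
  have s: "{0..<p} \<subseteq> {0..<p+q}" "{p+b} \<subseteq> {0..<p+q}" using assms by auto
  have t: "iota_set p {b} = sym_diff {0..<p} {p+b}" unfolding iota_set_def by auto
  have bs: "blade_sign p {0..<p} {p+b} = 1"
  proof -
    have "inversion_sign {0..<p} {p+b} = 1" by (intro inversion_sign_ordered) auto
    moreover have "{0..<p} \<inter> {p+b} = {}" by auto
    ultimately show ?thesis by (simp add: blade_sign_factor square_sign_def)
  qed
  show ?thesis unfolding cl_vec_std_basis cl_blade_mult[OF s] t bs by (simp add: iota_coeff_def reversal_sign_def)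
qed

lemma iota_blade_eq:
  assumes p3: "p mod 4 = 3" and A: "A \<subseteq> {0..<q}"
  shows "iota_blade p q A = (\<lambda>C. iota_coeff A * cl_blade (iota_set p A) C)"
proof -
  have "finite A" using A finite_subset by auto
  then show ?thesis using A
  proof (induction A rule: finite_linorder_min_induct)
    case empty
    then show ?case by (simp add: iota_blade_def cl_prod_def cl_one_eq_blade iota_coeff_def reversal_sign_def iota_set_def)
  next
    case (insert b A)
    have bq: "b < q" and Aq: "A \<subseteq> {0..<q}" using insert by auto
    have IH: "iota_blade p q A = (\<lambda>C. iota_coeff A * cl_blade (iota_set p A) C)" using insert Aq by simp
    have "iota_blade p q (insert b A) = cl_mult p q (cl_mult p q (cl_blade {0..<p}) (cl_vec (std_basis (p + b)))) (iota_blade p q A)"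
    proof -
      have "sorted_list_of_set (insert b A) = b # sorted_list_of_set A"
        using insert by (intro sorted_list_of_set_insert_min) auto
      then show ?thesis unfolding iota_blade_def by (simp only: list.map cl_prod_Cons)
    qed
    also have "\<dots> = cl_mult p q (\<lambda>C. iota_coeff {b} * cl_blade (iota_set p {b}) C) (\<lambda>C. iota_coeff A * cl_blade (iota_set p A) C)"
      unfolding IH iota_generator[OF bq] ..
    also have "\<dots> = (\<lambda>C. iota_coeff {b} * iota_coeff A * blade_sign p (iota_set p {b}) (iota_set p A) * cl_blade (sym_diff (iota_set p {b}) (iota_set p A)) C)"
      by (rule cl_mult_scaled_blades) (use bq Aq in \<open>auto intro!: iota_set_subset\<close>)
    also have "\<dots> = (\<lambda>C. iota_coeff (insert b A) * cl_blade (iota_set p (insert b A)) C)"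
    proof -
      have b1: "{b} \<subseteq> {0..<q}" using bq by auto
      have "iota_coeff {b} * iota_coeff A * blade_sign p (iota_set p {b}) (iota_set p A) = blade_sign q {b} A * iota_coeff (sym_diff {b} A)"
        by (rule iota_coeff_mult[OF p3 b1 Aq])
      moreover have "blade_sign q {b} A = 1"
      proof -
        have "inversion_sign {b} A = 1" using insert by (intro inversion_sign_ordered) (auto simp: less_imp_le)
        moreover have "{b} \<inter> A = {}" using insert by auto
        ultimately show ?thesis using insert by (simp add: blade_sign_factor square_sign_def)
      qed
      moreover have "sym_diff {b} A = insert b A" using insert by auto
      moreover have "sym_diff (iota_set p {b}) (iota_set p A) = iota_set p (insert b A)"
        using iota_set_sym_diff[of "{b}" A p] insert \<open>sym_diff {b} A = insert b A\<close> by simp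
      ultimately show ?thesis by simp
    qed
    finally show ?case .
  qed
qed

lemma iota_eq_sum:
  assumes p3: "p mod 4 = 3"
  shows "iota p q x = (\<lambda>C. \<Sum>A\<in>Pow {0..<q}. (x A * iota_coeff A) * cl_blade (iota_set p A) C)"
  unfolding iota_def by (rule ext, intro sum.cong refl) (simp add: iota_blade_eq[OF p3] mult.assoc)

lemma blade_sq_iota_set:
  assumes p3: "p mod 4 = 3" and A: "A \<subseteq> {0..<q}"
  shows "blade_sq p (iota_set p A) = blade_sq q A"
proof -
  have "iota_coeff A * iota_coeff A * blade_sign p (iota_set p A) (iota_set p A) = blade_sign q A A * iota_coeff (sym_diff A A)"
    by (rule iota_coeff_mult[OF p3 A A])
  moreover have "iota_coeff A * iota_coeff A = 1" unfolding iota_coeff_def by (rule reversal_sign_square)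
  moreover have "iota_coeff (sym_diff A A) = 1" by (simp add: iota_coeff_def reversal_sign_def)
  ultimately show ?thesis unfolding blade_sq_def by simp
qed

lemma iota_mult:
  assumes p3: "p mod 4 = 3"
  shows "iota p q (cl_mult q 0 x y) = cl_mult p q (iota p q x) (iota p q y)"
proof
  fix C
  let ?Q = "Pow {0..<q}"
  have fQ: "finite ?Q" by simp
  have sub: "\<And>A. A \<in> ?Q \<Longrightarrow> iota_set p A \<subseteq> {0..<p+q}" by (auto intro!: iota_set_subset)
  have "iota p q (cl_mult q 0 x y) C =
      (\<Sum>D\<in>?Q. \<Sum>A\<in>?Q. \<Sum>B\<in>?Q. if sym_diff A B = D then blade_sign q A B * x A * y B * (iota_coeff D * cl_blade (iota_set p D) C) else 0)"
    unfolding iota_eq_sum[OF p3] cl_mult_def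
    by (simp only: add_0_right sum_distrib_right) (intro sum.cong refl, simp)
  also have "\<dots> = (\<Sum>A\<in>?Q. \<Sum>B\<in>?Q. \<Sum>D\<in>?Q. if sym_diff A B = D then blade_sign q A B * x A * y B * (iota_coeff D * cl_blade (iota_set p D) C) else 0)"
    by (rule sum_rotate_3[symmetric])
  also have "\<dots> = (\<Sum>A\<in>?Q. \<Sum>B\<in>?Q. blade_sign q A B * x A * y B * (iota_coeff (sym_diff A B) * cl_blade (iota_set p (sym_diff A B)) C))"
    by (intro sum.cong refl, subst sum.delta'[OF fQ]) auto
  also have "\<dots> = (\<Sum>A\<in>?Q. \<Sum>B\<in>?Q. (x A * iota_coeff A) * (y B * iota_coeff B) * blade_sign p (iota_set p A) (iota_set p B) * cl_blade (sym_diff (iota_set p A) (iota_set p B)) C)"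
  proof (intro sum.cong refl)
    fix A B assume h: "A \<in> ?Q" "B \<in> ?Q"
    then have s: "iota_coeff A * iota_coeff B * blade_sign p (iota_set p A) (iota_set p B) = blade_sign q A B * iota_coeff (sym_diff A B)"
      by (intro iota_coeff_mult[OF p3]) auto
    have t: "sym_diff (iota_set p A) (iota_set p B) = iota_set p (sym_diff A B)" using h finite_subset by (intro iota_set_sym_diff) auto
    show "blade_sign q A B * x A * y B * (iota_coeff (sym_diff A B) * cl_blade (iota_set p (sym_diff A B)) C) =
      (x A * iota_coeff A) * (y B * iota_coeff B) * blade_sign p (iota_set p A) (iota_set p B) * cl_blade (sym_diff (iota_set p A) (iota_set p B)) C"
      unfolding t using s by (simp add: ac_simps)
  qed
  also have "\<dots> = cl_mult p q (iota p q x) (iota p q y) C"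
    unfolding iota_eq_sum[OF p3] cl_mult_sum_left cl_mult_sum_right cl_mult_scale_left cl_mult_scale_right
    by (intro sum.cong refl) (simp add: cl_blade_mult sub ac_simps)
  finally show "iota p q (cl_mult q 0 x y) C = cl_mult p q (iota p q x) (iota p q y) C" .
qed

lemma cl_transpose_iota:
  assumes p3: "p mod 4 = 3"
  shows "cl_transpose p (iota p q x) = iota p q (cl_transpose q x)"
proof
  fix C
  have "cl_transpose p (iota p q x) C = (\<Sum>A\<in>Pow {0..<q}. blade_sq p C * ((x A * iota_coeff A) * cl_blade (iota_set p A) C))"
    unfolding cl_transpose_def iota_eq_sum[OF p3] by (simp add: sum_distrib_left)
  also have "\<dots> = (\<Sum>A\<in>Pow {0..<q}. (blade_sq q A * x A * iota_coeff A) * cl_blade (iota_set p A) C)"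
  proof (intro sum.cong refl)
    fix A assume "A \<in> Pow {0..<q}"
    then have "blade_sq p (iota_set p A) = blade_sq q A" by (intro blade_sq_iota_set[OF p3]) auto
    then show "blade_sq p C * ((x A * iota_coeff A) * cl_blade (iota_set p A) C) = (blade_sq q A * x A * iota_coeff A) * cl_blade (iota_set p A) C"
      by (cases "C = iota_set p A") (auto simp: cl_blade_def)
  qed
  also have "\<dots> = iota p q (cl_transpose q x) C"
    unfolding iota_eq_sum[OF p3] cl_transpose_def ..
  finally show "cl_transpose p (iota p q x) C = iota p q (cl_transpose q x) C" .
qed

lemma iota_one:
  assumes p3: "p mod 4 = 3"
  shows "iota p q cl_one = cl_one"
proof
  fix C
  have "iota p q cl_one C = (cl_one {} * iota_coeff {}) * cl_blade (iota_set p {}) C"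
    unfolding iota_eq_sum[OF p3] by (intro sum_eq_single) (auto simp: cl_one_def)
  then show "iota p q cl_one C = cl_one C"
    by (simp add: cl_one_def iota_coeff_def reversal_sign_def iota_set_def cl_blade_def)
qed

lemma iota_even:
  assumes p3: "p mod 4 = 3"
  shows "iota p q x \<in> cl_even p q"
  unfolding cl_even_def
proof (intro CollectI allI impI)
  fix C assume "iota p q x C \<noteq> 0"
  then obtain A where A: "A \<in> Pow {0..<q}" "(x A * iota_coeff A) * cl_blade (iota_set p A) C \<noteq> 0"
    unfolding iota_eq_sum[OF p3] by (rule sum.not_neutral_contains_not_neutral)
  then have C: "C = iota_set p A" by (auto simp: cl_blade_def split: if_splits)
  have "odd p" using p3 by presburger
  moreover have "finite A" using A finite_subset by auto
  ultimately show "C \<subseteq> {0..<p+q} \<and> even (card C)"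
    unfolding C using A even_card_iota_set iota_set_subset by auto
qed

lemma iota_pin_transpose_mult:
  assumes p3: "p mod 4 = 3" and g: "g \<in> pin_group q 0 (Vspace q)"
  shows "cl_mult p q (cl_transpose p (iota p q g)) (iota p q g) = cl_one"
proof -
  have "cl_mult q 0 (cl_transpose q g) g = cl_one" using pin_transpose_mult[of g q 0] g by simp
  then have "iota p q (cl_mult q 0 (cl_transpose q g) g) = cl_one" by (simp add: iota_one[OF p3])
  then show ?thesis unfolding iota_mult[OF p3] cl_transpose_iota[OF p3] .
qed

section \<open>The group \<open>Khat\<close>\<close>

lemma Khat_even:
  assumes p3: "p mod 4 = 3" and k: "k \<in> Khat p q"
  shows "k \<in> cl_even p q"
proof -
  obtain s g where k: "k = cl_mult p q s (iota p q g)" and s: "s \<in> spin_group p q (Vspace p)"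
    using k unfolding Khat_def by blast
  have "s \<in> cl_even p q" using s unfolding spin_group_def by simp
  then show ?thesis unfolding k by (intro cl_mult_even iota_even[OF p3])
qed

lemma Khat_transpose_mult:
  assumes p3: "p mod 4 = 3" and k: "k \<in> Khat p q"
  shows "cl_mult p q (cl_transpose p k) k = cl_one"
proof -
  obtain s g where k: "k = cl_mult p q s (iota p q g)" and s: "s \<in> spin_group p q (Vspace p)"
    and g: "g \<in> pin_group q 0 (Vspace q)"
    using k unfolding Khat_def by blast
  let ?i = "iota p q g"
  have ss: "cl_mult p q (cl_transpose p s) s = cl_one" using s unfolding spin_group_def by (intro pin_transpose_mult) simp
  have ii: "cl_mult p q (cl_transpose p ?i) ?i = cl_one" by (rule iota_pin_transpose_mult[OF p3 g])
  have ic: "?i \<in> clifford p q" using iota_even[OF p3] by (rule cl_even_imp_clifford)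
  have "cl_mult p q (cl_transpose p k) k = cl_mult p q (cl_mult p q (cl_transpose p ?i) (cl_transpose p s)) (cl_mult p q s ?i)"
    unfolding k cl_transpose_mult ..
  also have "\<dots> = cl_mult p q (cl_transpose p ?i) (cl_mult p q (cl_mult p q (cl_transpose p s) s) ?i)"
    by (simp add: cl_mult_assoc)
  also have "\<dots> = cl_one" unfolding ss cl_one_mult[OF ic] ii ..
  finally show ?thesis .
qed

text \<open>Take for \<open>B\<close> the shifted part of \<open>A\<close> above \<open>p\<close> and for \<open>S\<close> the part below \<open>p\<close>,
  complemented in \<open>{0..<p}\<close> when \<open>card B\<close> is odd.\<close>

lemma even_set_split_iota_set:
  assumes "odd p" "A \<subseteq> {0..<p+q}" "even (card A)"
  obtains S B where "S \<subseteq> {0..<p}" "even (card S)" "B \<subseteq> {0..<q}" "A = sym_diff S (iota_set p B)"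
proof -
  define A1 where "A1 = A \<inter> {0..<p}"
  define B where "B = (\<lambda>i. i - p) ` (A - {0..<p})"
  have shift_B: "(+) p ` B = A - {0..<p}"
  proof -
    have "\<And>x. x \<in> A - {0..<p} \<Longrightarrow> p + (x - p) = x" by auto
    then show ?thesis unfolding B_def by (force simp: image_iff)
  qed
  have Bq: "B \<subseteq> {0..<q}" unfolding B_def using assms(2) by auto
  have "finite A" using assms(2) finite_subset by auto
  then have "card A = card A1 + card B"
    using card_Int_Diff[of A "{0..<p}"] card_image[of "(+) p" B] shift_B by (simp add: A1_def inj_on_def)
  define S where "S = (if odd (card B) then {0..<p} - A1 else A1)"
  have Sp: "S \<subseteq> {0..<p}" unfolding S_def A1_def by auto
  have "even (card S)"
  proof (cases "odd (card B)")
    case True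
    have "card ({0..<p} - A1) = p - card A1" unfolding A1_def by (subst card_Diff_subset) auto
    moreover have "card A1 \<le> p" unfolding A1_def by (metis card_atLeastLessThan card_mono finite_atLeastLessThan inf_le2 diff_zero)
    ultimately show ?thesis
      unfolding S_def using True assms(1,3) \<open>card A = card A1 + card B\<close> by auto
  next
    case False
    then show ?thesis unfolding S_def using assms(3) \<open>card A = card A1 + card B\<close> by auto
  qed
  moreover have "A = sym_diff S (iota_set p B)"
    unfolding S_def iota_set_def shift_B using assms(2) unfolding A1_def by auto
  ultimately show ?thesis using that Sp Bq by blast
qed

lemma even_blade_Khat:
  assumes p3: "p mod 4 = 3" and A: "A \<subseteq> {0..<p+q}" "even (card A)"
  shows "\<exists>k\<in>Khat p q. \<exists>c\<in>{1,-1}. cl_blade A = (\<lambda>C. c * k C)"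
proof -
  have "odd p" using p3 by presburger
  then obtain S B where S: "S \<subseteq> {0..<p}" "even (card S)" and B: "B \<subseteq> {0..<q}"
    and A_eq: "A = sym_diff S (iota_set p B)"
    using even_set_split_iota_set A by blast
  have spin: "cl_blade S \<in> spin_group p q (Vspace p)"
    unfolding spin_group_def using cl_blade_pin[OF S(1), of q] cl_blade_even[of S p q] S by force
  have pin: "cl_blade B \<in> pin_group q 0 (Vspace q)"
    using cl_blade_pin[of B q 0] B by simp
  have iota_B: "iota p q (cl_blade B) = (\<lambda>C. iota_coeff B * cl_blade (iota_set p B) C)"
    unfolding iota_eq_sum[OF p3] using B by (subst sum_eq_single[of _ B]) (auto simp: cl_blade_def)
  have sub: "S \<subseteq> {0..<p+q}" "iota_set p B \<subseteq> {0..<p+q}"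
    using S(1) iota_set_subset[OF B] by auto
  have k: "cl_mult p q (cl_blade S) (iota p q (cl_blade B))
      = (\<lambda>C. iota_coeff B * blade_sign p S (iota_set p B) * cl_blade A C)"
    unfolding iota_B cl_mult_scale_right cl_blade_mult[OF sub] A_eq by (simp add: ac_simps)
  define c where "c = iota_coeff B * blade_sign p S (iota_set p B)"
  have "finite S" "finite (iota_set p B)" using S(1) iota_set_subset[OF B, of p] by (auto intro: finite_subset)
  then have "c * c = 1"
    unfolding c_def iota_coeff_def using reversal_sign_square[of "card B"] blade_sign_square[of S "iota_set p B" p]
    by (simp add: ac_simps)
  then have "cl_blade A = (\<lambda>C. c * cl_mult p q (cl_blade S) (iota p q (cl_blade B)) C)"
    unfolding k c_def by (auto simp: mult.assoc[symmetric])
  moreover have "cl_mult p q (cl_blade S) (iota p q (cl_blade B)) \<in> Khat p q"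
    unfolding Khat_def using spin pin by blast
  moreover have "c \<in> {1, -1}" using \<open>c * c = 1\<close> by (auto simp: square_eq_1_iff)
  ultimately show ?thesis by blast
qed

section \<open>Bilinear forms\<close>

lemma bilinear_form_sum_left: "bilinear_form \<beta> \<Longrightarrow> \<beta> (\<Sum>i\<in>I. f i) t = (\<Sum>i\<in>I. \<beta> (f i) t)"
  unfolding bilinear_form_def using real_vector.linear_sum[of "\<lambda>s. \<beta> s t"] by blast
lemma bilinear_form_sum_right: "bilinear_form \<beta> \<Longrightarrow> \<beta> s (\<Sum>i\<in>I. f i) = (\<Sum>i\<in>I. \<beta> s (f i))"
  unfolding bilinear_form_def using real_vector.linear_sum[of "\<beta> s"] by blast
lemma bilinear_form_scale_left: "bilinear_form \<beta> \<Longrightarrow> \<beta> (c *\<^sub>R s) t = c * \<beta> s t"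
  unfolding bilinear_form_def using real_vector.linear_scale[of "\<lambda>s. \<beta> s t"] by fastforce
lemma bilinear_form_scale_right: "bilinear_form \<beta> \<Longrightarrow> \<beta> s (c *\<^sub>R t) = c * \<beta> s t"
  unfolding bilinear_form_def using real_vector.linear_scale[of "\<beta> s"] by fastforce
lemma bilinear_form_add_left: "bilinear_form \<beta> \<Longrightarrow> \<beta> (s + s') t = \<beta> s t + \<beta> s' t"
  unfolding bilinear_form_def using real_vector.linear_add[of "\<lambda>s. \<beta> s t"] by fastforce
lemma bilinear_form_add_right: "bilinear_form \<beta> \<Longrightarrow> \<beta> s (t + t') = \<beta> s t + \<beta> s t'"
  unfolding bilinear_form_def using real_vector.linear_add[of "\<beta> s"] by fastforce

lemma bilinear_form_zero_left: "bilinear_form g \<Longrightarrow> g 0 t = 0"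
  using bilinear_form_scale_left[of g 0] by (metis scale_zero_left mult_zero_left)

lemma bilinear_form_diff_left: "bilinear_form g \<Longrightarrow> g (s - s') t = g s t - g s' t"
  using bilinear_form_add_left[of g s "(-1) *\<^sub>R s'" t] bilinear_form_scale_left[of g "-1" s' t] by simp
lemma bilinear_form_diff_right: "bilinear_form g \<Longrightarrow> g s (t - t') = g s t - g s t'"
  using bilinear_form_add_right[of g s t "(-1) *\<^sub>R t'"] bilinear_form_scale_right[of g s "-1" t'] by simp

lemma pos_def_imp_nonneg: "bilinear_form g \<Longrightarrow> pos_def g \<Longrightarrow> g u u \<ge> 0"
  unfolding pos_def_def by (cases "u = 0") (auto simp: bilinear_form_zero_left less_imp_le)


lemma scaled_pos_def_definite:
  assumes "pos_def g" "c \<noteq> 0"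
  shows "pos_def (\<lambda>s t. c * g s t) \<or> neg_def (\<lambda>s t. c * g s t)"
  using assms unfolding pos_def_def neg_def_def
  by (cases "c > 0") (auto simp: mult_neg_pos)

section \<open>Modules over the even subalgebra\<close>

definition even_blades :: "nat \<Rightarrow> nat \<Rightarrow> nat set set" where
  "even_blades p q = {A \<in> Pow {0..<p+q}. even (card A)}"

lemma finite_even_blades: "finite (even_blades p q)" unfolding even_blades_def by simp

lemma even_blades_cl_even: "A \<in> even_blades p q \<Longrightarrow> cl_blade A \<in> cl_even p q"
  unfolding even_blades_def by (auto intro: cl_blade_even)

lemma even_blades_sym_diff: "A \<in> even_blades p q \<Longrightarrow> B \<in> even_blades p q \<Longrightarrow> sym_diff A B \<in> even_blades p q"
  unfolding even_blades_def using even_card_sym_diff finite_subset by (auto intro: finite_subset)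

lemma cl_even_expand:
  assumes "x \<in> cl_even p q"
  shows "x = (\<lambda>C. \<Sum>A\<in>even_blades p q. x A * cl_blade A C)"
proof
  fix C
  show "x C = (\<Sum>A\<in>even_blades p q. x A * cl_blade A C)"
  proof (cases "C \<in> even_blades p q")
    case True
    then have "(\<Sum>A\<in>even_blades p q. x A * cl_blade A C) = x C * cl_blade C C"
      by (intro sum_eq_single[OF finite_even_blades]) (auto simp: cl_blade_def)
    then show ?thesis by (simp add: cl_blade_def)
  next
    case False
    then have "x C = 0" using assms by (auto simp: cl_even_def even_blades_def)
    moreover have "(\<Sum>A\<in>even_blades p q. x A * cl_blade A C) = 0"
      using False by (intro sum.neutral) (auto simp: cl_blade_def)
    ultimately show ?thesis by simp
  qed
qed

lemma cl_even_sum: "(\<And>i. i \<in> I \<Longrightarrow> f i \<in> cl_even p q) \<Longrightarrow> (\<lambda>A. \<Sum>i\<in>I. f i A) \<in> cl_even p q"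
  unfolding cl_even_def by (fastforce elim: sum.not_neutral_contains_not_neutral)

lemma cl_even_scale: "x \<in> cl_even p q \<Longrightarrow> (\<lambda>A. c * x A) \<in> cl_even p q"
  unfolding cl_even_def by auto

locale cl0_rep =
  fixes p q :: nat and \<rho> :: "mv \<Rightarrow> 'w::real_vector \<Rightarrow> 'w"
  assumes rho_module: "cl0_module p q \<rho>"
begin

lemma rho_one: "\<rho> cl_one = id"
  using rho_module unfolding cl0_module_def by simp

lemma rho_lin: "x \<in> cl_even p q \<Longrightarrow> linear (\<rho> x)"
  using rho_module unfolding cl0_module_def by simp

lemma rho_add: "x \<in> cl_even p q \<Longrightarrow> y \<in> cl_even p q \<Longrightarrow> \<rho> (\<lambda>A. x A + y A) = (\<lambda>w. \<rho> x w + \<rho> y w)"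
  using rho_module unfolding cl0_module_def by simp

lemma rho_scale: "x \<in> cl_even p q \<Longrightarrow> \<rho> (\<lambda>A. c * x A) = (\<lambda>w. c *\<^sub>R \<rho> x w)"
  using rho_module unfolding cl0_module_def by simp

lemma rho_mult: "x \<in> cl_even p q \<Longrightarrow> y \<in> cl_even p q \<Longrightarrow> \<rho> (cl_mult p q x y) = \<rho> x \<circ> \<rho> y"
  using rho_module unfolding cl0_module_def by simp

lemma rho_zero: "\<rho> (\<lambda>A. 0) = (\<lambda>w. 0)"
  using rho_scale[OF cl_one_even, of 0] by simp

lemma rho_sum:
  assumes "finite I" "\<And>i. i \<in> I \<Longrightarrow> f i \<in> cl_even p q"
  shows "\<rho> (\<lambda>A. \<Sum>i\<in>I. f i A) = (\<lambda>w. \<Sum>i\<in>I. \<rho> (f i) w)"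
  using assms
proof (induction I rule: finite_induct)
  case empty then show ?case by (simp add: rho_zero)
next
  case (insert i I)
  have e: "(\<lambda>A. \<Sum>j\<in>insert i I. f j A) = (\<lambda>A. f i A + (\<Sum>j\<in>I. f j A))" using insert by simp
  have "(\<lambda>A. \<Sum>j\<in>I. f j A) \<in> cl_even p q" using insert by (intro cl_even_sum) auto
  then show ?case unfolding e using insert by (subst rho_add) auto
qed

lemma rho_even_expand:
  assumes "x \<in> cl_even p q"
  shows "\<rho> x w = (\<Sum>A\<in>even_blades p q. x A *\<^sub>R \<rho> (cl_blade A) w)"
proof -
  have "\<rho> x = \<rho> (\<lambda>C. \<Sum>A\<in>even_blades p q. x A * cl_blade A C)" using cl_even_expand[OF assms] by simp
  also have "\<dots> = (\<lambda>w. \<Sum>A\<in>even_blades p q. \<rho> (\<lambda>C. x A * cl_blade A C) w)"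
    by (intro rho_sum finite_even_blades cl_even_scale even_blades_cl_even)
  also have "\<dots> = (\<lambda>w. \<Sum>A\<in>even_blades p q. x A *\<^sub>R \<rho> (cl_blade A) w)"
    by (intro ext sum.cong refl) (simp add: rho_scale even_blades_cl_even)
  finally show ?thesis by simp
qed

lemma rho_blade_mult:
  assumes "A \<in> even_blades p q" "B \<in> even_blades p q"
  shows "\<rho> (cl_blade A) (\<rho> (cl_blade B) w) = blade_sign p A B *\<^sub>R \<rho> (cl_blade (sym_diff A B)) w"
proof -
  have s: "A \<subseteq> {0..<p+q}" "B \<subseteq> {0..<p+q}" using assms by (auto simp: even_blades_def)
  have "\<rho> (cl_blade A) (\<rho> (cl_blade B) w) = \<rho> (cl_mult p q (cl_blade A) (cl_blade B)) w"
    using rho_mult[OF even_blades_cl_even even_blades_cl_even, OF assms] by simp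
  also have "\<dots> = blade_sign p A B *\<^sub>R \<rho> (cl_blade (sym_diff A B)) w"
    unfolding cl_blade_mult[OF s] using rho_scale[OF even_blades_cl_even[OF even_blades_sym_diff[OF assms]]] by simp
  finally show ?thesis .
qed

lemma rho_blade_inverse:
  assumes "A \<in> even_blades p q"
  shows "\<rho> (cl_blade A) (blade_sq p A *\<^sub>R \<rho> (cl_blade A) w) = w"
proof -
  have f: "finite A" using assms by (auto simp: even_blades_def intro: finite_subset)
  have "\<rho> (cl_blade A) (blade_sq p A *\<^sub>R \<rho> (cl_blade A) w) = blade_sq p A *\<^sub>R \<rho> (cl_blade A) (\<rho> (cl_blade A) w)"
    using rho_lin[OF even_blades_cl_even[OF assms]] by (simp add: linear_scale)
  also have "\<dots> = (blade_sq p A * blade_sq p A) *\<^sub>R \<rho> (cl_blade {}) w"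
    unfolding rho_blade_mult[OF assms assms] by (simp add: blade_sq_def)
  also have "\<dots> = w" using blade_sq_square[OF f] by (simp add: cl_one_eq_blade[symmetric] rho_one)
  finally show ?thesis .
qed

lemma rho_even_blades_commute:
  assumes A: "A \<in> even_blades p q" and B: "B \<in> even_blades p q"
  shows "\<rho> (cl_blade B) (\<rho> (cl_blade A) w)
       = (\<Prod>a\<in>A. if a \<in> B then -1 else 1) *\<^sub>R \<rho> (cl_blade A) (\<rho> (cl_blade B) w)"
proof -
  have fA: "finite A" "even (card A)" and fB: "finite B"
    using A B by (auto simp: even_blades_def intro: finite_subset)
  have "blade_sign p B A = blade_sign p A B * (blade_sign p A B * blade_sign p B A)"
    using blade_sign_square[OF fA(1) fB, of p] by (simp add: mult.assoc[symmetric])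
  also have "\<dots> = blade_sign p A B * (\<Prod>a\<in>A. if a \<in> B then -1 else 1)"
    using fA by (simp add: blade_sign_commute[OF fA(1) fB] minus_one_power_iff)
  finally have "blade_sign p B A = blade_sign p A B * (\<Prod>a\<in>A. if a \<in> B then -1 else 1)" .
  moreover have "sym_diff B A = sym_diff A B" by auto
  ultimately show ?thesis by (simp add: rho_blade_mult[OF A B] rho_blade_mult[OF B A] mult.commute)
qed

lemma even_blades_invariant_subspace:
  assumes U: "subspace U" and inv: "\<And>A u. A \<in> even_blades p q \<Longrightarrow> u \<in> U \<Longrightarrow> \<rho> (cl_blade A) u \<in> U"
    and x: "x \<in> cl_even p q" and u: "u \<in> U"
  shows "\<rho> x u \<in> U"
  unfolding rho_even_expand[OF x]
  by (intro real_vector.subspace_sum[OF U] real_vector.subspace_scale[OF U] inv u)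

text \<open>The orbit of any \<open>w\<^sub>0 \<noteq> 0\<close> under the finitely many even blades spans a submodule.\<close>

lemma irreducible_finite_span:
  assumes irr: "irreducible_under (cl_even p q) \<rho>"
  shows "\<exists>B::'w set. finite B \<and> span B = UNIV"
proof -
  obtain w0 :: 'w where w0: "w0 \<noteq> 0" using irr unfolding irreducible_under_def by blast
  define G where "G = (\<lambda>A. \<rho> (cl_blade A) w0) ` even_blades p q"
  have fG: "finite G" unfolding G_def using finite_even_blades by simp
  have sub: "subspace (span G)" by (rule real_vector.subspace_span)
  have inv: "\<forall>x\<in>cl_even p q. \<forall>u\<in>span G. \<rho> x u \<in> span G"
  proof (intro ballI, rule even_blades_invariant_subspace[OF sub])
    fix A u assume A: "A \<in> even_blades p q" and u: "u \<in> span G"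
    have lin: "linear (\<rho> (cl_blade A))" by (rule rho_lin[OF even_blades_cl_even[OF A]])
    have "\<rho> (cl_blade A) ` G \<subseteq> span G"
    proof
      fix v assume "v \<in> \<rho> (cl_blade A) ` G"
      then obtain B where B: "B \<in> even_blades p q" "v = \<rho> (cl_blade A) (\<rho> (cl_blade B) w0)" unfolding G_def by auto
      then have "v = blade_sign p A B *\<^sub>R \<rho> (cl_blade (sym_diff A B)) w0" using rho_blade_mult[OF A] by simp
      moreover have "\<rho> (cl_blade (sym_diff A B)) w0 \<in> G" unfolding G_def using even_blades_sym_diff[OF A B(1)] by blast
      ultimately show "v \<in> span G" by (simp add: real_vector.span_base real_vector.span_scale)
    qed
    then have "span (\<rho> (cl_blade A) ` G) \<subseteq> span G" by (simp add: real_vector.span_minimal)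
    then show "\<rho> (cl_blade A) u \<in> span G" using span_linear_image[OF lin, of G] u by blast
  qed
  have "w0 \<in> span G"
  proof -
    have "{} \<in> even_blades p q" by (simp add: even_blades_def)
    moreover have "\<rho> (cl_blade {}) w0 = w0" by (simp add: cl_one_eq_blade[symmetric] rho_one)
    ultimately have "w0 \<in> G" unfolding G_def by force
    then show ?thesis by (rule real_vector.span_base)
  qed
  then have "span G \<noteq> {0}" using w0 by blast
  then have "span G = UNIV" using irr sub inv unfolding irreducible_under_def by blast
  then show ?thesis using fG by blast
qed

end

section \<open>Finite-dimensional linear algebra\<close>

lemma finite_basis_exists:
  assumes "finite G" "span G = (UNIV :: 'w::real_vector set)"
  shows "\<exists>Bs::'w set. finite Bs \<and> independent Bs \<and> span Bs = UNIV"
proof -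
  obtain Bs :: "'w set" where "Bs \<subseteq> UNIV" and Bs: "independent Bs" "UNIV \<subseteq> span Bs"
    by (rule real_vector.maximal_independent_subset[of UNIV])
  have "Bs \<subseteq> span G" using assms(2) by simp
  then have "finite Bs" using real_vector.independent_span_bound[OF assms(1) Bs(1)] by blast
  moreover have "span Bs = UNIV" using Bs(2) by blast
  ultimately show ?thesis using Bs(1) by blast
qed


definition coord_inner :: "'w::real_vector set \<Rightarrow> 'w \<Rightarrow> 'w \<Rightarrow> real" where
  "coord_inner Bs s t = (\<Sum>b\<in>Bs. representation Bs s b * representation Bs t b)"

lemma coord_inner_bilinear:
  assumes "independent Bs" "span Bs = UNIV"
  shows "bilinear_form (coord_inner Bs)"
proof -
  have sp: "\<And>v. v \<in> span Bs" using assms by simp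
  have l: "linear (\<lambda>s. representation Bs s b)" for b
    by (rule linearI) (simp_all add: real_vector.representation_add[OF assms(1) sp sp] real_vector.representation_scale[OF assms(1) sp])
  show ?thesis unfolding bilinear_form_def coord_inner_def
  proof (intro conjI allI)
    fix s show "linear (\<lambda>t. \<Sum>b\<in>Bs. representation Bs s b * representation Bs t b)"
      by (intro linear_compose_sum ballI linear_compose[OF l linear_times, unfolded comp_def])
  next
    fix t show "linear (\<lambda>s. \<Sum>b\<in>Bs. representation Bs s b * representation Bs t b)"
      by (subst mult.commute, intro linear_compose_sum ballI linear_compose[OF l linear_times, unfolded comp_def])
  qed
qed

lemma coord_inner_sym: "coord_inner Bs s t = coord_inner Bs t s"
  unfolding coord_inner_def by (simp add: mult.commute)

lemma coord_inner_nonneg: "coord_inner Bs s s \<ge> 0"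
  unfolding coord_inner_def by (intro sum_nonneg) simp

lemma coord_inner_pos:
  assumes "finite Bs" "independent Bs" "span Bs = UNIV" "s \<noteq> 0"
  shows "coord_inner Bs s s > 0"
proof -
  have "\<exists>b\<in>Bs. representation Bs s b \<noteq> 0"
  proof (rule ccontr)
    assume "\<not> ?thesis"
    then have z: "\<forall>b. representation Bs s b = 0" using real_vector.representation_ne_zero by blast
    have "s = (\<Sum>b | representation Bs s b \<noteq> 0. representation Bs s b *\<^sub>R b)"
      using real_vector.sum_nonzero_representation_eq[OF assms(2)] assms(3) by simp
    also have "\<dots> = 0" using z by simp
    finally show False using assms(4) by simp
  qed
  then obtain b where b: "b \<in> Bs" "representation Bs s b \<noteq> 0" by blast
  show ?thesis unfolding coord_inner_def
    by (rule sum_pos2[OF assms(1) b(1)]) (use b in \<open>auto simp: zero_less_mult_iff\<close>)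
qed

lemma linear_inj_imp_surj_finite_basis:
  assumes a: "finite (Bs::'w::real_vector set)" "independent Bs" "span Bs = UNIV" "linear (f::'w\<Rightarrow>'w)" "inj f"
  shows "surj f"
proof -
  interpret fd: finite_dimensional_vector_space "(*\<^sub>R)" Bs
    by unfold_locales (use a in \<open>auto simp: dependent_raw_def span_raw_def\<close>)
  show "surj f" by (rule fd.linear_inj_imp_surj) (use a in \<open>auto simp: linear_def real_scaleR_def[abs_def]\<close>)
qed

definition riesz_op :: "'w::real_vector set \<Rightarrow> ('w \<Rightarrow> 'w \<Rightarrow> real) \<Rightarrow> 'w \<Rightarrow> 'w" where
  "riesz_op Bs \<phi> t = (\<Sum>b\<in>Bs. \<phi> b t *\<^sub>R b)"

lemma riesz_op_linear:
  assumes "bilinear_form \<phi>"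
  shows "linear (riesz_op Bs \<phi>)"
proof -
  have l: "linear (\<phi> b)" for b using assms unfolding bilinear_form_def by auto
  have "linear (\<lambda>t. \<phi> b t *\<^sub>R b)" for b
    using linear_compose[OF l real_vector.linear_scale_left[of b]] by (simp add: comp_def)
  then show ?thesis unfolding riesz_op_def by (intro linear_compose_sum) auto
qed

lemma riesz_op_represents:
  assumes fin: "finite Bs" and ind: "independent Bs" and sp: "span Bs = UNIV" and bil: "bilinear_form \<phi>"
  shows "coord_inner Bs s (riesz_op Bs \<phi> t) = \<phi> s t"
proof -
  have spv: "\<And>v. v \<in> span Bs" using sp by simp
  have rep: "representation Bs (riesz_op Bs \<phi> t) b = \<phi> b t" if b: "b \<in> Bs" for b
  proof -
    have "representation Bs (riesz_op Bs \<phi> t) = (\<lambda>b. \<Sum>b'\<in>Bs. representation Bs (\<phi> b' t *\<^sub>R b') b)"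
      unfolding riesz_op_def by (rule real_vector.representation_sum[OF ind]) (simp add: spv)
    then have "representation Bs (riesz_op Bs \<phi> t) b = (\<Sum>b'\<in>Bs. \<phi> b' t * (if b = b' then 1 else 0))"
      by (simp add: real_vector.representation_scale[OF ind] spv real_vector.representation_basis[OF ind])
    also have "\<dots> = \<phi> b t" using b fin by (simp add: if_distrib cong: if_cong)
    finally show ?thesis .
  qed
  have "coord_inner Bs s (riesz_op Bs \<phi> t) = (\<Sum>b\<in>Bs. representation Bs s b * \<phi> b t)"
    unfolding coord_inner_def by (intro sum.cong refl) (simp add: rep)
  also have "\<dots> = \<phi> (\<Sum>b\<in>Bs. representation Bs s b *\<^sub>R b) t"
    by (simp add: bilinear_form_sum_left[OF bil] bilinear_form_scale_left[OF bil])
  also have "(\<Sum>b\<in>Bs. representation Bs s b *\<^sub>R b) = s"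
    by (rule real_vector.sum_representation_eq[OF ind spv fin]) simp
  finally show ?thesis .
qed
lemma pos_def_nondegenerate:
  fixes g :: "'w::real_vector \<Rightarrow> 'w \<Rightarrow> real"
  assumes "pos_def g" "\<And>s. g s d = 0"
  shows "d = 0"
  using assms unfolding pos_def_def by (metis less_irrefl)

lemma bilinear_form_representation:
  fixes Bs :: "'w::real_vector set" and g \<beta> :: "'w \<Rightarrow> 'w \<Rightarrow> real"
  assumes fin: "finite Bs" and ind: "independent Bs" and sp: "span Bs = UNIV"
    and g: "bilinear_form g" "pos_def g" and \<beta>: "bilinear_form \<beta>"
  obtains M where "linear M" "\<And>s t. g s (M t) = \<beta> s t"
proof -
  define G where "G = riesz_op Bs g"
  define B where "B = riesz_op Bs \<beta>"
  have linG: "linear G" unfolding G_def by (rule riesz_op_linear[OF g(1)])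
  have linB: "linear B" unfolding B_def by (rule riesz_op_linear[OF \<beta>])
  have gG: "\<And>s t. coord_inner Bs s (G t) = g s t" unfolding G_def by (rule riesz_op_represents[OF fin ind sp g(1)])
  have \<beta>B: "\<And>s t. coord_inner Bs s (B t) = \<beta> s t" unfolding B_def by (rule riesz_op_represents[OF fin ind sp \<beta>])
  have "inj G"
  proof (rule injI)
    fix a b assume "G a = G b"
    then have "G (a - b) = 0" using linG by (simp add: real_vector.linear_diff)
    then have "\<And>s. g s (a - b) = 0" using gG[symmetric] by (simp add: coord_inner_def real_vector.representation_zero)
    then show "a = b" using pos_def_nondegenerate[OF g(2)] by fastforce
  qed
  then have "surj G" by (rule linear_inj_imp_surj_finite_basis[OF fin ind sp linG])
  define M where "M = inv G \<circ> B"
  have GM: "G (M t) = B t" for t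
    unfolding M_def by (simp add: surj_f_inv_f[OF \<open>surj G\<close>])
  have "linear M"
  proof (rule linearI)
    fix a b
    have "G (M (a + b)) = G (M a + M b)" using linG linB by (simp add: GM real_vector.linear_add)
    then show "M (a + b) = M a + M b" using \<open>inj G\<close> by (simp add: inj_eq)
  next
    fix r a
    have "G (M (r *\<^sub>R a)) = G (r *\<^sub>R M a)" using linG linB by (simp add: GM real_vector.linear_scale)
    then show "M (r *\<^sub>R a) = r *\<^sub>R M a" using \<open>inj G\<close> by (simp add: inj_eq)
  qed
  moreover have "g s (M t) = \<beta> s t" for s t using gG GM \<beta>B by metis
  ultimately show ?thesis using that by blast
qed

section \<open>Self-adjoint operators have real eigenvectors\<close>

definition poly_op :: "real poly \<Rightarrow> ('w::real_vector \<Rightarrow> 'w) \<Rightarrow> 'w \<Rightarrow> 'w" where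
  "poly_op f M v = (\<Sum>i\<le>degree f. coeff f i *\<^sub>R (M ^^ i) v)"

lemma poly_op_bound:
  assumes "degree f \<le> N"
  shows "poly_op f M v = (\<Sum>i\<le>N. coeff f i *\<^sub>R (M ^^ i) v)"
proof -
  have "(\<Sum>i\<le>N. coeff f i *\<^sub>R (M ^^ i) v) = (\<Sum>i\<le>degree f. coeff f i *\<^sub>R (M ^^ i) v)"
    using assms by (intro sum.mono_neutral_right) (auto simp: coeff_eq_0)
  then show ?thesis unfolding poly_op_def by simp
qed

lemma poly_op_add: "poly_op (f + h) M v = poly_op f M v + poly_op h M v"
proof -
  let ?N = "max (degree f) (degree h)"
  have "degree (f + h) \<le> ?N" by (rule degree_add_le) auto
  then show ?thesis
    by (simp add: poly_op_bound[of _ ?N] sum.distrib scaleR_add_left)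
qed

lemma poly_op_smult: "poly_op (smult c f) M v = c *\<^sub>R poly_op f M v"
  by (simp add: poly_op_bound[of _ "degree f"] scaleR_sum_right)

lemma poly_op_pCons:
  assumes "linear M"
  shows "poly_op (pCons a f) M v = a *\<^sub>R v + M (poly_op f M v)"
proof -
  let ?N = "degree f"
  have d: "degree (pCons a f) \<le> Suc ?N" by (simp add: degree_pCons_le)
  have "poly_op (pCons a f) M v = (\<Sum>i\<le>Suc ?N. coeff (pCons a f) i *\<^sub>R (M ^^ i) v)"
    by (rule poly_op_bound[OF d])
  also have "\<dots> = a *\<^sub>R v + (\<Sum>i\<le>?N. coeff f i *\<^sub>R (M ^^ Suc i) v)"
    by (subst sum.atMost_Suc_shift) simp
  also have "(\<Sum>i\<le>?N. coeff f i *\<^sub>R (M ^^ Suc i) v) = M (poly_op f M v)"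
    unfolding poly_op_def using assms
    by (simp add: real_vector.linear_sum real_vector.linear_scale)
  finally show ?thesis .
qed

lemma poly_op_const: "poly_op [:c:] M v = c *\<^sub>R v"
  by (simp add: poly_op_def)

lemma poly_op_zero: "poly_op 0 M v = 0"
  by (simp add: poly_op_def)

lemma poly_op_mult:
  assumes "linear M"
  shows "poly_op (f * h) M v = poly_op f M (poly_op h M v)"
proof (induction f arbitrary: v rule: pCons_induct)
  case 0 then show ?case by (simp add: poly_op_zero)
next
  case (pCons a f)
  have "poly_op (pCons a f * h) M v = poly_op (smult a h + pCons 0 (f * h)) M v" by simp
  also have "\<dots> = a *\<^sub>R poly_op h M v + M (poly_op f M (poly_op h M v))"
    by (simp add: poly_op_add poly_op_smult poly_op_pCons[OF assms] pCons.IH)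
  also have "\<dots> = poly_op (pCons a f) M (poly_op h M v)" by (simp add: poly_op_pCons[OF assms])
  finally show ?case .
qed

definition poly_complex :: "real poly \<Rightarrow> complex \<Rightarrow> complex" where
  "poly_complex f z = poly (map_poly complex_of_real f) z"

lemma poly_complex_pCons: "poly_complex (pCons a f) z = of_real a + z * poly_complex f z"
  unfolding poly_complex_def by (simp add: map_poly_pCons)

lemma poly_complex_0: "poly_complex 0 z = 0" unfolding poly_complex_def by simp

lemma poly_complex_add: "poly_complex (f + h) z = poly_complex f z + poly_complex h z"
proof (induction f arbitrary: h rule: pCons_induct)
  case 0 then show ?case by (simp add: poly_complex_0)
next
  case (pCons a f)
  show ?case
  proof (cases h rule: pCons_cases)
    case (pCons b h')
    have "poly_complex (f + h') z = poly_complex f z + poly_complex h' z" by (rule pCons.IH)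
    then show ?thesis using pCons by (simp add: poly_complex_pCons algebra_simps)
  qed
qed

lemma poly_complex_smult: "poly_complex (smult c f) z = of_real c * poly_complex f z"
  unfolding poly_complex_def by (simp add: map_poly_smult)

lemma poly_complex_mult: "poly_complex (f * h) z = poly_complex f z * poly_complex h z"
proof (induction f rule: pCons_induct)
  case 0 then show ?case by (simp add: poly_complex_0)
next
  case (pCons a f)
  have "poly_complex (pCons a f * h) z = poly_complex (smult a h + pCons 0 (f * h)) z" by simp
  also have "\<dots> = of_real a * poly_complex h z + z * (poly_complex f z * poly_complex h z)"
    by (simp add: poly_complex_add poly_complex_smult poly_complex_pCons pCons.IH)
  also have "\<dots> = poly_complex (pCons a f) z * poly_complex h z" by (simp add: poly_complex_pCons algebra_simps)
  finally show ?case .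
qed

lemma poly_complex_of_real: "poly_complex f (of_real x) = of_real (poly f x)"
  by (induction f rule: pCons_induct) (simp_all add: poly_complex_0 poly_complex_pCons)

lemma degree_map_poly_of_real: "degree (map_poly complex_of_real f) = degree f"
  by (rule degree_map_poly) simp

lemma poly_complex_root_exists:
  assumes "degree f > 0"
  shows "\<exists>z. poly_complex f z = 0"
proof -
  have "\<not> constant (poly (map_poly complex_of_real f))"
    using assms by (simp add: constant_degree degree_map_poly_of_real)
  then show ?thesis unfolding poly_complex_def using fundamental_theorem_of_algebra by blast
qed

lemma poly_degree_le_1_eq:
  assumes "degree (r::real poly) \<le> 1"
  shows "r = [:coeff r 0, coeff r 1:]"
proof (rule poly_eqI)
  fix n show "coeff r n = coeff [:coeff r 0, coeff r 1:] n"
    using assms by (cases n) (auto simp: coeff_pCons coeff_eq_0 split: nat.splits)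
qed

lemma quadratic_factor_of_nonreal_root:
  assumes "poly_complex f z = 0" "Im z \<noteq> 0"
  shows "[:Re z ^ 2 + Im z ^ 2, - 2 * Re z, 1:] dvd f"
proof -
  let ?Q = "[:Re z ^ 2 + Im z ^ 2, - 2 * Re z, 1:]"
  have Q0: "?Q \<noteq> 0" by simp
  have EQ: "poly_complex ?Q z = 0"
    by (simp add: poly_complex_pCons poly_complex_0 complex_eq_iff power2_eq_square algebra_simps)
  define r where "r = f mod ?Q"
  have dec: "f = (f div ?Q) * ?Q + r" unfolding r_def by (rule div_mult_mod_eq[symmetric])
  have Er: "poly_complex r z = 0"
  proof -
    have "poly_complex f z = poly_complex (f div ?Q) z * poly_complex ?Q z + poly_complex r z" by (subst dec) (simp only: poly_complex_add poly_complex_mult)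
    then show ?thesis using assms(1) EQ by simp
  qed
  have "r = 0"
  proof (rule ccontr)
    assume rn: "r \<noteq> 0"
    have "degree r < degree ?Q" using degree_mod_less[OF Q0, of f] rn unfolding r_def by auto
    then have "degree r \<le> 1" by simp
    then have rf: "r = [:coeff r 0, coeff r 1:]" by (rule poly_degree_le_1_eq)
    have "poly_complex r z = of_real (coeff r 0) + z * of_real (coeff r 1)"
      by (subst rf) (simp add: poly_complex_pCons poly_complex_0)
    then have "of_real (coeff r 0) + z * of_real (coeff r 1) = 0" using Er by simp
    then have "coeff r 1 * Im z = 0" "coeff r 0 + Re z * coeff r 1 = 0"
      by (auto simp: complex_eq_iff)
    then have "coeff r 1 = 0" "coeff r 0 = 0" using assms(2) by auto
    then have "r = 0" using rf by simp
    with rn show False by simp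
  qed
  then show ?thesis unfolding r_def by (simp add: mod_eq_0_iff_dvd)
qed

lemma real_poly_small_factor:
  fixes f :: "real poly"
  assumes "degree f > 0"
  obtains r where "[:-r, 1:] dvd f"
    | x y where "y \<noteq> 0" "[:x ^ 2 + y ^ 2, - 2 * x, 1:] dvd f"
proof -
  obtain z where z: "poly_complex f z = 0" using poly_complex_root_exists[OF assms] by blast
  show ?thesis
  proof (cases "Im z = 0")
    case True
    then have "z = of_real (Re z)" by (simp add: complex_eq_iff)
    then have "poly f (Re z) = 0" using z poly_complex_of_real[of f "Re z"] by simp
    then show ?thesis using that(1) by (simp add: poly_eq_0_iff_dvd)
  next
    case False
    then show ?thesis using that(2) quadratic_factor_of_nonreal_root[OF z] by blast
  qed
qed

lemma poly_op_linear_factor: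
  assumes "linear M" "poly_op [:-r, 1:] M w = 0"
  shows "M w = r *\<^sub>R w"
  using assms by (simp add: poly_op_pCons poly_op_zero real_vector.linear_0 algebra_simps)

text \<open>For self-adjoint \<open>M\<close> the value of \<open>M\<^sup>2 - 2 x M + x\<^sup>2 + y\<^sup>2\<close> on \<open>w\<close>, paired with \<open>w\<close>,
  is \<open>g u u + y\<^sup>2 g w w\<close> with \<open>u = M w - x w\<close>.\<close>

lemma poly_op_quadratic_factor:
  fixes M :: "'w::real_vector \<Rightarrow> 'w" and g :: "'w \<Rightarrow> 'w \<Rightarrow> real"
  assumes lin: "linear M" and bil: "bilinear_form g" and sym: "sym_form g" and pd: "pos_def g"
    and adj: "\<And>s t. g (M s) t = g s (M t)"
    and "y \<noteq> 0" and Qw: "poly_op [:x ^ 2 + y ^ 2, - 2 * x, 1:] M w = 0"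
  shows "w = 0"
proof (rule ccontr)
  assume "w \<noteq> 0"
  define u where "u = M w - x *\<^sub>R w"
  have "(x ^ 2 + y ^ 2) *\<^sub>R w + (M (M w) - (2 * x) *\<^sub>R M w) = 0"
    using Qw by (simp add: poly_op_pCons[OF lin] poly_op_zero real_vector.linear_0[OF lin]
        real_vector.linear_add[OF lin] real_vector.linear_diff[OF lin] real_vector.linear_scale[OF lin] algebra_simps)
  then have "0 = g ((x ^ 2 + y ^ 2) *\<^sub>R w + (M (M w) - (2 * x) *\<^sub>R M w)) w"
    by (simp add: bilinear_form_zero_left[OF bil])
  also have "\<dots> = (x ^ 2 + y ^ 2) * g w w - 2 * x * g (M w) w + g (M w) (M w)"
    unfolding bilinear_form_add_left[OF bil] bilinear_form_diff_left[OF bil] bilinear_form_scale_left[OF bil]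
    by (simp add: adj)
  also have "\<dots> = g u u + y ^ 2 * g w w"
    using sym unfolding u_def sym_form_def bilinear_form_diff_left[OF bil] bilinear_form_diff_right[OF bil]
      bilinear_form_scale_left[OF bil] bilinear_form_scale_right[OF bil]
    by (simp add: power2_eq_square algebra_simps)
  finally have "g u u + y ^ 2 * g w w = 0" by simp
  moreover have "g w w > 0" using pd \<open>w \<noteq> 0\<close> unfolding pos_def_def by blast
  moreover have "y ^ 2 > 0" using \<open>y \<noteq> 0\<close> by simp
  moreover have "g u u \<ge> 0" by (rule pos_def_imp_nonneg[OF bil pd])
  ultimately show False by (metis add_nonneg_pos mult_pos_pos less_irrefl)
qed

lemma no_eigenvector_poly_op_zero:
  fixes M :: "'w::real_vector \<Rightarrow> 'w" and g :: "'w \<Rightarrow> 'w \<Rightarrow> real"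
  assumes lin: "linear M" and bil: "bilinear_form g" and sym: "sym_form g" and pd: "pos_def g"
    and adj: "\<And>s t. g (M s) t = g s (M t)"
    and no_eigenvector: "\<And>c v. M v = c *\<^sub>R v \<Longrightarrow> v = 0"
  shows "f \<noteq> 0 \<Longrightarrow> poly_op f M v = 0 \<Longrightarrow> v = 0"
proof (induction "degree f" arbitrary: f v rule: less_induct)
  case less
  show ?case
  proof (cases "degree f = 0")
    case True
    then have f: "f = [:coeff f 0:]"
      by (intro poly_eqI) (auto simp: coeff_pCons coeff_eq_0 split: nat.splits)
    then have "coeff f 0 \<noteq> 0" using less.prems(1) by (metis pCons_eq_0_iff)
    moreover have "coeff f 0 *\<^sub>R v = 0" using less.prems(2) f poly_op_const by metis
    ultimately show ?thesis by simp
  next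
    case False
    have step: "v = 0" if Q: "f = Q * h" "degree Q > 0" and Qw: "poly_op Q M (poly_op h M v) = 0 \<Longrightarrow> poly_op h M v = 0"
      for Q h
    proof -
      have "h \<noteq> 0" "Q \<noteq> 0" using Q less.prems(1) by auto
      then have "degree h < degree f" using Q by (simp add: degree_mult_eq)
      moreover have "poly_op h M v = 0"
        using Qw less.prems(2) unfolding Q(1) poly_op_mult[OF lin] by blast
      ultimately show ?thesis using less.hyps \<open>h \<noteq> 0\<close> by blast
    qed
    from False have "degree f > 0" by simp
    then show ?thesis
    proof (cases rule: real_poly_small_factor)
      case (1 r)
      then obtain h where "f = [:-r, 1:] * h" by (elim dvdE)
      moreover have "degree [:-r, 1:] > 0" by simp
      ultimately show ?thesis
        using step no_eigenvector poly_op_linear_factor[OF lin] by blast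
    next
      case (2 x y)
      then obtain h where "f = [:x ^ 2 + y ^ 2, - 2 * x, 1:] * h" by (elim dvdE)
      moreover have "degree [:x ^ 2 + y ^ 2, - 2 * x, 1:] > 0" by simp
      ultimately show ?thesis
        using step poly_op_quadratic_factor[OF lin bil sym pd adj \<open>y \<noteq> 0\<close>] by blast
    qed
  qed
qed

lemma finite_dim_family_dependent:
  fixes vs :: "nat \<Rightarrow> 'w::real_vector" and Bs :: "'w set"
  assumes fin: "finite Bs" and sp: "span Bs = UNIV"
  obtains c i where "i \<le> card Bs" "c i \<noteq> 0" "(\<Sum>i\<le>card Bs. c i *\<^sub>R vs i) = 0"
proof (cases "inj_on vs {..card Bs}")
  case False
  then obtain i j where ij: "i \<le> card Bs" "j \<le> card Bs" "i \<noteq> j" "vs i = vs j"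
    unfolding inj_on_def by auto
  define c :: "nat \<Rightarrow> real" where "c = (\<lambda>k. if k = i then 1 else if k = j then -1 else 0)"
  have "(\<Sum>k\<le>card Bs. c k *\<^sub>R vs k)
      = (\<Sum>k\<le>card Bs. (if k = i then vs i else 0) - (if k = j then vs j else 0))"
    using ij(3) by (intro sum.cong refl) (auto simp: c_def)
  also have "\<dots> = vs i - vs j"
    using ij(1,2) by (simp only: sum_subtractf sum.delta finite_atMost atMost_iff if_True)
  also have "\<dots> = 0" using ij(4) by simp
  finally show ?thesis using that[of i c] ij by (simp add: c_def)
next
  case True
  define S where "S = vs ` {..card Bs}"
  have "\<not> independent S"
  proof
    assume "independent S"
    then have "card S \<le> card Bs" using real_vector.independent_span_bound[OF fin] sp by auto
    then show False using True unfolding S_def by (simp add: card_image)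
  qed
  then obtain T u where T: "finite T" "T \<subseteq> S" "\<exists>v\<in>T. u v \<noteq> 0" "(\<Sum>v\<in>T. u v *\<^sub>R v) = 0"
    unfolding real_vector.dependent_explicit by blast
  define c where "c = (\<lambda>i. if vs i \<in> T then u (vs i) else 0)"
  obtain i where i: "i \<le> card Bs" "vs i \<in> T" "u (vs i) \<noteq> 0" using T(2,3) unfolding S_def by auto
  have inj: "inj_on vs {i \<in> {..card Bs}. vs i \<in> T}" using True by (rule inj_on_subset) auto
  have "(\<Sum>i\<le>card Bs. c i *\<^sub>R vs i) = (\<Sum>i\<le>card Bs. if vs i \<in> T then u (vs i) *\<^sub>R vs i else 0)"
    by (intro sum.cong refl) (simp add: c_def)
  also have "\<dots> = (\<Sum>i\<in>{i \<in> {..card Bs}. vs i \<in> T}. u (vs i) *\<^sub>R vs i)"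
    by (rule sum.inter_filter[symmetric]) simp
  also have "\<dots> = (\<Sum>v\<in>T. u v *\<^sub>R v)"
  proof -
    have "vs ` {i \<in> {..card Bs}. vs i \<in> T} = T" using T(2) unfolding S_def by auto
    then show ?thesis using sum.reindex[OF inj, of "\<lambda>v. u v *\<^sub>R v"] by simp
  qed
  finally show ?thesis using that[of i c] i T(4) by (simp add: c_def)
qed

lemma poly_op_annihilator:
  fixes M :: "'w::real_vector \<Rightarrow> 'w" and Bs :: "'w set" and w :: 'w
  assumes fin: "finite Bs" and sp: "span Bs = UNIV"
  shows "\<exists>f. f \<noteq> 0 \<and> poly_op f M w = 0"
proof -
  obtain c i where c: "i \<le> card Bs" "c i \<noteq> 0" "(\<Sum>i\<le>card Bs. c i *\<^sub>R (M ^^ i) w) = 0"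
    using finite_dim_family_dependent[OF fin sp, of "\<lambda>i. (M ^^ i) w"] by blast
  define f where "f = (\<Sum>i\<le>card Bs. monom (c i) i)"
  have cf: "coeff f k = (if k \<le> card Bs then c k else 0)" for k
    unfolding f_def coeff_sum coeff_monom by (simp add: sum.delta)
  have "degree f \<le> card Bs" by (rule degree_le) (simp add: cf)
  then have "poly_op f M w = 0" using c(3) unfolding poly_op_bound[OF \<open>degree f \<le> card Bs\<close>] by (simp add: cf)
  moreover have "f \<noteq> 0" using cf[of i] c(1,2) by auto
  ultimately show ?thesis by blast
qed

lemma self_adjoint_eigenvector:
  fixes M :: "'w::real_vector \<Rightarrow> 'w" and g :: "'w \<Rightarrow> 'w \<Rightarrow> real" and Bs :: "'w set"
  assumes fin: "finite Bs" and sp: "span Bs = UNIV" and ne: "\<exists>w::'w. w \<noteq> 0"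
    and lin: "linear M" and bil: "bilinear_form g" and sym: "sym_form g" and pd: "pos_def g"
    and adj: "\<And>s t. g (M s) t = g s (M t)"
  shows "\<exists>c v. v \<noteq> 0 \<and> M v = c *\<^sub>R v"
proof (rule ccontr)
  assume "\<not> ?thesis"
  then have no_eigenvector: "\<And>c v. M v = c *\<^sub>R v \<Longrightarrow> v = 0" by blast
  obtain w :: 'w where w: "w \<noteq> 0" using ne by blast
  obtain f where f: "f \<noteq> 0" "poly_op f M w = 0" using poly_op_annihilator[OF fin sp, of M w] by (elim exE conjE)
  have "w = 0" by (rule no_eigenvector_poly_op_zero[OF lin bil sym pd adj no_eigenvector f(1) f(2)])
  with w show False by simp
qed
section \<open>Invariant forms on irreducible modules\<close>

context cl0_rep
begin

definition blade_invariant :: "('w \<Rightarrow> 'w \<Rightarrow> real) \<Rightarrow> bool" where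
  "blade_invariant \<beta> \<longleftrightarrow>
     (\<forall>A\<in>even_blades p q. \<forall>s t. \<beta> (\<rho> (cl_blade A) s) (\<rho> (cl_blade A) t) = \<beta> s t)"

lemma irreducible_finite_basis:
  assumes "irreducible_under (cl_even p q) \<rho>"
  obtains Bs :: "'w set" where "finite Bs" "independent Bs" "span Bs = UNIV"
  using irreducible_finite_span[OF assms] finite_basis_exists by blast

definition averaged_form :: "'w set \<Rightarrow> 'w \<Rightarrow> 'w \<Rightarrow> real" where
  "averaged_form Bs s t = (\<Sum>A\<in>even_blades p q. coord_inner Bs (\<rho> (cl_blade A) s) (\<rho> (cl_blade A) t))"

lemma averaged_form_bilinear:
  assumes "independent Bs" "span Bs = UNIV"
  shows "bilinear_form (averaged_form Bs)"
proof -
  have b: "bilinear_form (coord_inner Bs)" by (rule coord_inner_bilinear[OF assms])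
  have l1: "linear (\<lambda>s. coord_inner Bs s t)" for t using b unfolding bilinear_form_def by auto
  have l2: "linear (coord_inner Bs s)" for s using b unfolding bilinear_form_def by auto
  have lr: "A \<in> even_blades p q \<Longrightarrow> linear (\<rho> (cl_blade A))" for A by (rule rho_lin[OF even_blades_cl_even])
  show ?thesis unfolding bilinear_form_def averaged_form_def
  proof (intro conjI allI)
    fix s show "linear (\<lambda>t. \<Sum>A\<in>even_blades p q. coord_inner Bs (\<rho> (cl_blade A) s) (\<rho> (cl_blade A) t))"
      by (intro linear_compose_sum) (auto intro: linear_compose[OF lr l2, unfolded comp_def])
  next
    fix t show "linear (\<lambda>s. \<Sum>A\<in>even_blades p q. coord_inner Bs (\<rho> (cl_blade A) s) (\<rho> (cl_blade A) t))"
      by (intro linear_compose_sum) (auto intro: linear_compose[OF lr l1, unfolded comp_def])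
  qed
qed

lemma averaged_form_sym: "sym_form (averaged_form Bs)"
  unfolding sym_form_def averaged_form_def by (simp add: coord_inner_sym)

lemma averaged_form_pos_def:
  assumes "finite Bs" "independent Bs" "span Bs = UNIV"
  shows "pos_def (averaged_form Bs)"
  unfolding pos_def_def
proof (intro allI impI)
  fix s :: 'w assume s: "s \<noteq> 0"
  have e: "{} \<in> even_blades p q" by (simp add: even_blades_def)
  have "coord_inner Bs (\<rho> (cl_blade {}) s) (\<rho> (cl_blade {}) s) > 0"
    using coord_inner_pos[OF assms s] by (simp add: cl_one_eq_blade[symmetric] rho_one)
  then show "averaged_form Bs s s > 0" unfolding averaged_form_def
    by (intro sum_pos2[OF finite_even_blades e]) (auto simp: coord_inner_nonneg)
qed

lemma averaged_form_blade_invariant: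
  assumes "independent Bs" "span Bs = UNIV" and B: "B \<in> even_blades p q"
  shows "averaged_form Bs (\<rho> (cl_blade B) s) (\<rho> (cl_blade B) t) = averaged_form Bs s t"
proof -
  have b: "bilinear_form (coord_inner Bs)" by (rule coord_inner_bilinear[OF assms(1,2)])
  have "averaged_form Bs (\<rho> (cl_blade B) s) (\<rho> (cl_blade B) t) =
      (\<Sum>A\<in>even_blades p q. coord_inner Bs (\<rho> (cl_blade (sym_diff A B)) s) (\<rho> (cl_blade (sym_diff A B)) t))"
    unfolding averaged_form_def
  proof (intro sum.cong refl)
    fix A assume A: "A \<in> even_blades p q"
    have f: "finite A" "finite B" using A B by (auto simp: even_blades_def intro: finite_subset)
    show "coord_inner Bs (\<rho> (cl_blade A) (\<rho> (cl_blade B) s)) (\<rho> (cl_blade A) (\<rho> (cl_blade B) t)) =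
        coord_inner Bs (\<rho> (cl_blade (sym_diff A B)) s) (\<rho> (cl_blade (sym_diff A B)) t)"
      unfolding rho_blade_mult[OF A B] bilinear_form_scale_left[OF b] bilinear_form_scale_right[OF b]
      using blade_sign_square[OF f, of p] by (simp add: mult.assoc[symmetric])
  qed
  also have "\<dots> = averaged_form Bs s t" unfolding averaged_form_def
    by (rule sum.reindex_bij_witness[of _ "\<lambda>A. sym_diff A B" "\<lambda>A. sym_diff A B"]) (auto intro: even_blades_sym_diff[OF _ B])
  finally show ?thesis .
qed

lemma exists_blade_invariant_inner_product:
  assumes "irreducible_under (cl_even p q) \<rho>"
  obtains g where "bilinear_form g" "sym_form g" "pos_def g" "blade_invariant g"
proof -
  obtain Bs :: "'w set" where Bs: "finite Bs" "independent Bs" "span Bs = UNIV"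
    using irreducible_finite_basis[OF assms] by blast
  have "blade_invariant (averaged_form Bs)"
    unfolding blade_invariant_def using averaged_form_blade_invariant[OF Bs(2,3)] by blast
  then show ?thesis
    using that averaged_form_bilinear[OF Bs(2,3)] averaged_form_sym averaged_form_pos_def[OF Bs] by blast
qed

lemma rho_transpose_adjoint:
  assumes bil: "bilinear_form \<beta>" and inv: "blade_invariant \<beta>" and x: "x \<in> cl_even p q"
  shows "\<beta> (\<rho> x s) t = \<beta> s (\<rho> (cl_transpose p x) t)"
proof -
  have blade: "\<beta> (\<rho> (cl_blade A) s) t = \<beta> s (blade_sq p A *\<^sub>R \<rho> (cl_blade A) t)"
    if A: "A \<in> even_blades p q" for A s t
  proof -
    have "\<beta> (\<rho> (cl_blade A) s) t
        = \<beta> (\<rho> (cl_blade A) s) (\<rho> (cl_blade A) (blade_sq p A *\<^sub>R \<rho> (cl_blade A) t))"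
      by (simp add: rho_blade_inverse[OF A])
    also have "\<dots> = \<beta> s (blade_sq p A *\<^sub>R \<rho> (cl_blade A) t)"
      using inv A unfolding blade_invariant_def by blast
    finally show ?thesis .
  qed
  have "\<beta> (\<rho> x s) t = (\<Sum>A\<in>even_blades p q. x A * \<beta> (\<rho> (cl_blade A) s) t)"
    unfolding rho_even_expand[OF x] by (simp add: bilinear_form_sum_left[OF bil] bilinear_form_scale_left[OF bil])
  also have "\<dots> = \<beta> s (\<Sum>A\<in>even_blades p q. (blade_sq p A * x A) *\<^sub>R \<rho> (cl_blade A) t)"
    by (simp add: blade bilinear_form_sum_right[OF bil] bilinear_form_scale_right[OF bil] ac_simps)
  also have "\<dots> = \<beta> s (\<rho> (cl_transpose p x) t)"
    unfolding rho_even_expand[OF cl_transpose_even[OF x]] by (simp add: cl_transpose_def)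
  finally show ?thesis .
qed

lemma representing_operator_commutes:
  assumes g: "bilinear_form g" "pos_def g" "blade_invariant g" and "blade_invariant \<beta>"
    and M: "\<And>s t. g s (M t) = \<beta> s t" and A: "A \<in> even_blades p q"
  shows "M (\<rho> (cl_blade A) t) = \<rho> (cl_blade A) (M t)"
proof -
  let ?R = "\<rho> (cl_blade A)"
  have "g s (M (?R t)) = g s (?R (M t))" for s
  proof -
    define s' where "s' = blade_sq p A *\<^sub>R ?R s"
    have s: "?R s' = s" unfolding s'_def by (rule rho_blade_inverse[OF A])
    have "g s (M (?R t)) = \<beta> (?R s') (?R t)" by (simp add: M s)
    also have "\<dots> = \<beta> s' t" using \<open>blade_invariant \<beta>\<close> A unfolding blade_invariant_def by blast
    also have "\<dots> = g (?R s') (?R (M t))"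
      using g(3) A M unfolding blade_invariant_def by metis
    finally show ?thesis unfolding s .
  qed
  then have "\<And>s. g s (M (?R t) - ?R (M t)) = 0" by (simp add: bilinear_form_diff_right[OF g(1)])
  then show ?thesis using pos_def_nondegenerate[OF g(2)] by fastforce
qed

lemma irreducible_eigenspace_eq_UNIV:
  assumes irr: "irreducible_under (cl_even p q) \<rho>" and M: "linear M"
    and comm: "\<And>A t. A \<in> even_blades p q \<Longrightarrow> M (\<rho> (cl_blade A) t) = \<rho> (cl_blade A) (M t)"
    and v: "v \<noteq> 0" "M v = c *\<^sub>R v"
  shows "M t = c *\<^sub>R t"
proof -
  define K where "K = {t. M t = c *\<^sub>R t}"
  have subK: "subspace K" unfolding K_def subspace_def using M
    by (auto simp: real_vector.linear_0 real_vector.linear_add real_vector.linear_scale scaleR_add_right)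
  have "\<forall>x\<in>cl_even p q. \<forall>u\<in>K. \<rho> x u \<in> K"
  proof (intro ballI, rule even_blades_invariant_subspace[OF subK])
    fix A u assume A: "A \<in> even_blades p q" and u: "u \<in> K"
    have "M (\<rho> (cl_blade A) u) = \<rho> (cl_blade A) (c *\<^sub>R u)" using comm[OF A] u unfolding K_def by simp
    also have "\<dots> = c *\<^sub>R \<rho> (cl_blade A) u"
      using rho_lin[OF even_blades_cl_even[OF A]] by (simp add: real_vector.linear_scale)
    finally show "\<rho> (cl_blade A) u \<in> K" unfolding K_def by simp
  qed
  moreover have "K \<noteq> {0}" using v unfolding K_def by auto
  ultimately have "K = UNIV" using irr subK unfolding irreducible_under_def by blast
  then show ?thesis unfolding K_def by auto
qed

lemma blade_invariant_form_unique:
  assumes irr: "irreducible_under (cl_even p q) \<rho>"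
    and g: "bilinear_form g" "sym_form g" "pos_def g" "blade_invariant g"
    and \<beta>: "bilinear_form \<beta>" "sym_form \<beta>" "blade_invariant \<beta>"
  shows "\<exists>c. \<beta> = (\<lambda>s t. c * g s t)"
proof -
  obtain Bs :: "'w set" where Bs: "finite Bs" "independent Bs" "span Bs = UNIV"
    using irreducible_finite_basis[OF irr] by blast
  obtain M where M: "linear M" "\<And>s t. g s (M t) = \<beta> s t"
    using bilinear_form_representation[OF Bs g(1,3) \<beta>(1)] by blast
  have adj: "g (M s) t = g s (M t)" for s t
    using g(2) \<beta>(2) M(2) unfolding sym_form_def by metis
  have nontrivial: "\<exists>w::'w. w \<noteq> 0" using irr unfolding irreducible_under_def by blast
  obtain c v where "v \<noteq> 0" "M v = c *\<^sub>R v"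
    using self_adjoint_eigenvector[OF Bs(1,3) nontrivial M(1) g(1-3) adj] by blast
  then have "M t = c *\<^sub>R t" for t
    using irreducible_eigenspace_eq_UNIV[OF irr M(1)] representing_operator_commutes[OF g(1,3,4) \<beta>(3) M(2)]
    by blast
  then have "\<beta> s t = c * g s t" for s t
    using M(2) bilinear_form_scale_right[OF g(1)] by metis
  then show ?thesis by blast
qed

end

section \<open>Invariance under \<open>Khat\<close> versus invariance under the even blades\<close>

locale cl0_rep_3mod4 = cl0_rep +
  assumes p_3mod4: "p mod 4 = 3"
begin

lemma rho_even_blade_Khat:
  assumes "A \<in> even_blades p q"
  shows "\<exists>k\<in>Khat p q. \<exists>c\<in>{1,-1}. \<rho> (cl_blade A) = (\<lambda>w. c *\<^sub>R \<rho> k w)"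
proof -
  obtain k c where k: "k \<in> Khat p q" "c \<in> {1,-1}" "cl_blade A = (\<lambda>C. c * k C)"
    using even_blade_Khat[OF p_3mod4] assms unfolding even_blades_def by blast
  have "k \<in> cl_even p q" using Khat_even[OF p_3mod4 k(1)] .
  then have "\<rho> (cl_blade A) = (\<lambda>w. c *\<^sub>R \<rho> k w)" unfolding k(3) by (rule rho_scale)
  then show ?thesis using k by blast
qed

lemma Khat_invariant_subspace_iff:
  assumes "subspace U"
  shows "(\<forall>x\<in>Khat p q. \<forall>u\<in>U. \<rho> x u \<in> U) \<longleftrightarrow> (\<forall>x\<in>cl_even p q. \<forall>u\<in>U. \<rho> x u \<in> U)"
proof
  assume Khat_inv: "\<forall>x\<in>Khat p q. \<forall>u\<in>U. \<rho> x u \<in> U"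
  show "\<forall>x\<in>cl_even p q. \<forall>u\<in>U. \<rho> x u \<in> U"
  proof (intro ballI, rule even_blades_invariant_subspace[OF assms])
    fix A u assume "A \<in> even_blades p q" "u \<in> U"
    then obtain k c where "k \<in> Khat p q" "\<rho> (cl_blade A) = (\<lambda>w. c *\<^sub>R \<rho> k w)"
      using rho_even_blade_Khat by blast
    then show "\<rho> (cl_blade A) u \<in> U"
      using Khat_inv \<open>u \<in> U\<close> assms by (auto intro: real_vector.subspace_scale)
  qed
next
  assume "\<forall>x\<in>cl_even p q. \<forall>u\<in>U. \<rho> x u \<in> U"
  then show "\<forall>x\<in>Khat p q. \<forall>u\<in>U. \<rho> x u \<in> U" using Khat_even[OF p_3mod4] by blast
qed

lemma irreducible_cl_even_iff_Khat:
  "irreducible_under (cl_even p q) \<rho> \<longleftrightarrow> irreducible_under (Khat p q) \<rho>"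
  unfolding irreducible_under_def using Khat_invariant_subspace_iff by blast

lemma blade_invariant_iff_Khat_invariant:
  assumes bil: "bilinear_form \<beta>"
  shows "blade_invariant \<beta> \<longleftrightarrow> invariant_form (Khat p q) \<rho> \<beta>"
proof
  assume "blade_invariant \<beta>"
  show "invariant_form (Khat p q) \<rho> \<beta>"
    unfolding invariant_form_def
  proof (intro ballI allI)
    fix k s t assume k: "k \<in> Khat p q"
    have ke: "k \<in> cl_even p q" by (rule Khat_even[OF p_3mod4 k])
    have "\<beta> (\<rho> k s) (\<rho> k t) = \<beta> s (\<rho> (cl_transpose p k) (\<rho> k t))"
      by (rule rho_transpose_adjoint[OF bil \<open>blade_invariant \<beta>\<close> ke])
    also have "\<rho> (cl_transpose p k) (\<rho> k t) = \<rho> (cl_mult p q (cl_transpose p k) k) t"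
      using rho_mult[OF cl_transpose_even[OF ke] ke] by simp
    also have "\<dots> = t" unfolding Khat_transpose_mult[OF p_3mod4 k] rho_one by simp
    finally show "\<beta> (\<rho> k s) (\<rho> k t) = \<beta> s t" .
  qed
next
  assume inv: "invariant_form (Khat p q) \<rho> \<beta>"
  show "blade_invariant \<beta>"
    unfolding blade_invariant_def
  proof (intro ballI allI)
    fix A s t assume "A \<in> even_blades p q"
    then obtain k c where k: "k \<in> Khat p q" "c \<in> {1,-1}" "\<rho> (cl_blade A) = (\<lambda>w. c *\<^sub>R \<rho> k w)"
      using rho_even_blade_Khat by blast
    have "\<beta> (\<rho> (cl_blade A) s) (\<rho> (cl_blade A) t) = (c * c) * \<beta> (\<rho> k s) (\<rho> k t)"
      unfolding k(3) by (simp add: bilinear_form_scale_left[OF bil] bilinear_form_scale_right[OF bil])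
    also have "\<dots> = \<beta> s t" using k(1,2) inv unfolding invariant_form_def by auto
    finally show "\<beta> (\<rho> (cl_blade A) s) (\<rho> (cl_blade A) t) = \<beta> s t" .
  qed
qed

lemma Khat_invariant_inner_product_unique:
  assumes irr: "irreducible_under (cl_even p q) \<rho>"
  shows "\<exists>g. bilinear_form g \<and> sym_form g \<and> invariant_form (Khat p q) \<rho> g \<and> pos_def g \<and>
      (\<forall>\<beta>. bilinear_form \<beta> \<and> sym_form \<beta> \<and> invariant_form (Khat p q) \<rho> \<beta> \<longrightarrow> (\<exists>c. \<beta> = (\<lambda>s t. c * g s t)))"
proof -
  obtain g where g: "bilinear_form g" "sym_form g" "pos_def g" "blade_invariant g"
    using exists_blade_invariant_inner_product[OF irr] by blast
  then show ?thesis
    using blade_invariant_form_unique[OF irr g] blade_invariant_iff_Khat_invariant by blast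
qed

end

section \<open>The form \<open>b(\<Pi>)\<close> of an equivariant map \<open>\<Pi> : \<wedge>\<^sup>2 W \<rightarrow> V\<close>\<close>

definition basis_sign :: "nat \<Rightarrow> nat \<Rightarrow> real" where
  "basis_sign p k = (if k < p then 1 else -1)"

lemma std_basis_Vspace: "k < n \<Longrightarrow> std_basis k \<in> Vspace n"
  unfolding Vspace_def std_basis_def by auto

lemma pq_inner_std_basis: "k < p + q \<Longrightarrow> pq_inner p q (std_basis k) z = basis_sign p k * z k"
proof -
  assume k: "k < p + q"
  show ?thesis
  proof (cases "k < p")
    case True
    have "(\<Sum>i<p. std_basis k i * z i) = z k" using True by (subst sum_eq_single[of _ k]) (auto simp: std_basis_def)
    moreover have "(\<Sum>i\<in>{p..<p+q}. std_basis k i * z i) = 0" using True by (intro sum.neutral) (auto simp: std_basis_def)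
    ultimately show ?thesis using True by (simp add: pq_inner_def basis_sign_def)
  next
    case False
    have "(\<Sum>i<p. std_basis k i * z i) = 0" using False by (intro sum.neutral) (auto simp: std_basis_def)
    moreover have "(\<Sum>i\<in>{p..<p+q}. std_basis k i * z i) = z k" using False k by (subst sum_eq_single[of _ k]) (auto simp: std_basis_def)
    ultimately show ?thesis using False by (simp add: pq_inner_def basis_sign_def)
  qed
qed

lemma so_act_V_std_basis:
  assumes "i < p + q" "j < p + q"
  shows "so_act_V p q (std_basis i) (std_basis j) z k =
    basis_sign p j * z j * (if k = i then 1 else 0) - basis_sign p i * z i * (if k = j then 1 else 0)"
  unfolding so_act_V_def pq_inner_std_basis[OF assms(1)] pq_inner_std_basis[OF assms(2)] by (simp add: std_basis_def)

lemma blade_sq_pair: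
  assumes "i < j"
  shows "blade_sq p {i, j} = - (basis_sign p i * basis_sign p j)"
proof -
  have "{(a, b). a \<in> {i, j} \<and> b \<in> {i, j} \<and> b < a} = {(j, i)}" using assms by auto
  then show ?thesis using assms unfolding blade_sq_def blade_sign_def basis_sign_def cl_sq_def by auto
qed

context cl0_rep
begin

lemma so_act_W_std_basis:
  assumes "i < j" "j < p + q"
  shows "so_act_W p q \<rho> (std_basis i) (std_basis j) = (\<lambda>w. (- 1/2) *\<^sub>R \<rho> (cl_blade {i, j}) w)"
proof -
  have s: "{i} \<subseteq> {0..<p+q}" "{j} \<subseteq> {0..<p+q}" using assms by auto
  have e1: "cl_mult p q (cl_vec (std_basis i)) (cl_vec (std_basis j)) = (\<lambda>C. 1 * cl_blade {i, j} C)"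
    unfolding cl_vec_std_basis cl_blade_mult[OF s] using assms
    by (simp add: blade_sign_singletons insert_commute Un_commute)
  have e2: "cl_mult p q (cl_vec (std_basis j)) (cl_vec (std_basis i)) = (\<lambda>C. - 1 * cl_blade {i, j} C)"
    unfolding cl_vec_std_basis cl_blade_mult[OF s(2) s(1)] using assms
    by (auto simp: blade_sign_singletons insert_commute)
  have arg: "(\<lambda>A. -(1/4) * (cl_mult p q (cl_vec (std_basis i)) (cl_vec (std_basis j)) A
       - cl_mult p q (cl_vec (std_basis j)) (cl_vec (std_basis i)) A)) = (\<lambda>A. (- 1/2) * cl_blade {i, j} A)"
    unfolding e1 e2 by (rule ext) simp
  have ev: "cl_blade {i, j} \<in> cl_even p q" using assms by (intro cl_blade_even) auto
  show ?thesis unfolding so_act_W_def arg by (rule rho_scale[OF ev])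
qed

end

lemma split_two_smallest:
  fixes A :: "nat set"
  assumes "finite A" "even (card A)" "A \<noteq> {}"
  obtains a1 a2 R where "a1 < a2" "A = insert a1 (insert a2 R)" "a1 \<notin> R" "a2 \<notin> R" "\<forall>r\<in>R. a2 < r"
proof -
  define a1 where "a1 = Min A"
  have a1: "a1 \<in> A" "\<forall>a\<in>A. a1 \<le> a" unfolding a1_def using assms by auto
  have "card A \<noteq> 0" using assms(1,3) by simp
  with assms(2) have "card A \<ge> 2" by presburger
  moreover have "card A \<le> 1" if "A \<subseteq> {a1}" using card_mono[OF _ that] by simp
  ultimately have ne: "A - {a1} \<noteq> {}" by auto
  have fin: "finite (A - {a1})" using assms(1) by simp
  define a2 where "a2 = Min (A - {a1})"
  have a2: "a2 \<in> A - {a1}" unfolding a2_def by (rule Min_in[OF fin ne])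
  have a2_le: "a2 \<le> a" if "a \<in> A - {a1}" for a unfolding a2_def by (rule Min_le[OF fin that])
  have "a1 < a2" using a1 a2 by force
  moreover have "A = insert a1 (insert a2 (A - {a1, a2}))" using a1 a2 by auto
  moreover have "\<forall>r\<in>A - {a1, a2}. a2 < r" using a2_le by force
  ultimately show ?thesis using that by blast
qed

locale equivariant_Pi = cl0_rep_3mod4 p q \<rho> for p q :: nat and \<rho> :: "mv \<Rightarrow> 'w::real_vector \<Rightarrow> 'w" +
  fixes Pm :: "'w \<Rightarrow> 'w \<Rightarrow> nat \<Rightarrow> real"
  assumes Pm_wedge2: "wedge2_map p q Pm" and Pm_equivariant: "so_equivariant p q \<rho> Pm"
begin

lemma Pm_lin_r: "linear (\<lambda>t. Pm s t k)"
  using Pm_wedge2 unfolding wedge2_map_def by blast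

lemma Pm_lin_l: "linear (\<lambda>s. Pm s t k)"
  using Pm_wedge2 unfolding wedge2_map_def by blast

lemma Pm_antisym: "Pm s t k = - Pm t s k"
proof -
  have "Pm s t = (\<lambda>i. - Pm t s i)" using Pm_wedge2 unfolding wedge2_map_def by blast
  then show ?thesis by (rule fun_cong)
qed

lemma Pm_V: "k \<ge> p + q \<Longrightarrow> Pm s t k = 0"
proof -
  assume k: "k \<ge> p + q"
  have "Pm s t \<in> Vspace (p + q)" using Pm_wedge2 unfolding wedge2_map_def by blast
  then show ?thesis using k unfolding Vspace_def by blast
qed

lemma Pm_scale_l: "Pm (c *\<^sub>R s) t k = c * Pm s t k"
  using real_vector.linear_scale[OF Pm_lin_l[of t k], of c s] by simp

lemma Pm_scale_r: "Pm s (c *\<^sub>R t) k = c * Pm s t k"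
  using real_vector.linear_scale[OF Pm_lin_r[of s k], of c t] by simp

lemma Pm_pair_derivation:
  assumes ij: "i < j" "j < p + q"
  shows "Pm (\<rho> (cl_blade {i, j}) s) t k + Pm s (\<rho> (cl_blade {i, j}) t) k =
    -2 * (basis_sign p j * Pm s t j * (if k = i then 1 else 0) - basis_sign p i * Pm s t i * (if k = j then 1 else 0))"
proof -
  let ?R = "\<rho> (cl_blade {i, j})"
  have iv: "std_basis i \<in> Vspace (p+q)" "std_basis j \<in> Vspace (p+q)" using ij by (auto intro: std_basis_Vspace)
  have "(\<lambda>k. Pm (so_act_W p q \<rho> (std_basis i) (std_basis j) s) t k + Pm s (so_act_W p q \<rho> (std_basis i) (std_basis j) t) k)
     = so_act_V p q (std_basis i) (std_basis j) (Pm s t)"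
    using Pm_equivariant iv unfolding so_equivariant_def by blast
  then have "(\<lambda>k. Pm ((- 1/2) *\<^sub>R ?R s) t k + Pm s ((- 1/2) *\<^sub>R ?R t) k) = so_act_V p q (std_basis i) (std_basis j) (Pm s t)"
    unfolding so_act_W_std_basis[OF ij] .
  then have "Pm ((- 1/2) *\<^sub>R ?R s) t k + Pm s ((- 1/2) *\<^sub>R ?R t) k = so_act_V p q (std_basis i) (std_basis j) (Pm s t) k"
    by (rule fun_cong)
  then show ?thesis
    unfolding Pm_scale_l Pm_scale_r so_act_V_std_basis[OF less_trans[OF ij] ij(2)] by (simp add: algebra_simps)
qed

text \<open>Apply the derivation identity to \<open>(\<rho>(e\<^sub>i\<^sub>j) s, t)\<close> and to \<open>(s, \<rho>(e\<^sub>i\<^sub>j) t)\<close>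
  and add: since \<open>\<rho>(e\<^sub>i\<^sub>j)\<^sup>2\<close> is a scalar, the result is solved for \<open>\<Pi>(\<rho>(e\<^sub>i\<^sub>j) s, \<rho>(e\<^sub>i\<^sub>j) t)\<close>.\<close>

lemma Pm_pair_blade:
  assumes ij: "i < j" "j < p + q"
  shows "Pm (\<rho> (cl_blade {i, j}) s) (\<rho> (cl_blade {i, j}) t) k =
     basis_sign p i * basis_sign p j * (if k = i \<or> k = j then -1 else 1) * Pm s t k"
proof -
  let ?R = "\<rho> (cl_blade {i, j})"
  let ?e = "basis_sign p i * basis_sign p j"
  have A: "{i, j} \<in> even_blades p q" using ij unfolding even_blades_def by auto
  have RR: "?R (?R w) = (- ?e) *\<^sub>R w" for w
  proof -
    have "?R (?R w) = blade_sign p {i, j} {i, j} *\<^sub>R \<rho> (cl_blade (sym_diff {i,j} {i,j})) w" by (rule rho_blade_mult[OF A A])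
    also have "\<dots> = blade_sq p {i, j} *\<^sub>R w" by (simp add: blade_sq_def cl_one_eq_blade[symmetric] rho_one)
    finally show ?thesis using blade_sq_pair[OF ij(1)] by simp
  qed
  note D = Pm_pair_derivation[OF ij]
  have "2 * Pm (?R s) (?R t) k = -2 * (basis_sign p j * (Pm (?R s) t j + Pm s (?R t) j) * (if k = i then 1 else 0)
       - basis_sign p i * (Pm (?R s) t i + Pm s (?R t) i) * (if k = j then 1 else 0)) + 2 * ?e * Pm s t k"
    using D[of "?R s" t k] D[of s "?R t" k] unfolding RR Pm_scale_l Pm_scale_r by (simp add: algebra_simps)
  also have "\<dots> = 2 * (?e * (if k = i \<or> k = j then -1 else 1) * Pm s t k)"
    using D[of s t j] D[of s t i] ij by (auto simp: algebra_simps)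
  finally show ?thesis by simp
qed

lemma even_blade_split:
  assumes A: "A \<in> even_blades p q" "A \<noteq> {}"
  obtains a1 a2 R where "a1 < a2" "a2 < p + q" "R \<in> even_blades p q" "A = insert a1 (insert a2 R)"
    "a1 \<notin> R" "a2 \<notin> R" "card R < card A" "\<And>w. \<rho> (cl_blade A) w = \<rho> (cl_blade {a1, a2}) (\<rho> (cl_blade R) w)"
proof -
  have fA: "finite A" and sA: "A \<subseteq> {0..<p+q}" and eA: "even (card A)"
    using A by (auto simp: even_blades_def intro: finite_subset)
  obtain a1 a2 R where a12: "a1 < a2" and Aeq: "A = insert a1 (insert a2 R)"
    and R: "a1 \<notin> R" "a2 \<notin> R" "\<forall>r\<in>R. a2 < r"
    by (rule split_two_smallest[OF fA eA A(2)])
  have fR: "finite R" using fA Aeq by simp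
  have cR: "card A = Suc (Suc (card R))" using Aeq R a12 fR by simp
  have REv: "R \<in> even_blades p q" using sA eA cR unfolding even_blades_def Aeq by auto
  have PEv: "{a1, a2} \<in> even_blades p q" using sA Aeq a12 unfolding even_blades_def by auto
  have "inversion_sign {a1, a2} R = 1"
    using R(3) a12 by (intro inversion_sign_ordered) (auto simp: less_imp_le less_trans)
  moreover have "{a1, a2} \<inter> R = {}" using R by auto
  ultimately have "blade_sign p {a1, a2} R = 1" using fR by (simp add: blade_sign_factor square_sign_def)
  moreover have "sym_diff {a1, a2} R = A" using Aeq R by auto
  ultimately have "\<rho> (cl_blade A) w = \<rho> (cl_blade {a1, a2}) (\<rho> (cl_blade R) w)" for w
    using rho_blade_mult[OF PEv REv, of w] by simp
  moreover have "a2 < p + q" using sA Aeq by auto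
  ultimately show ?thesis using that[OF a12 _ REv Aeq R(1,2)] cR by simp
qed

lemma Pm_blade:
  assumes "A \<in> even_blades p q"
  shows "Pm (\<rho> (cl_blade A) s) (\<rho> (cl_blade A) t) k = (\<Prod>a\<in>A. basis_sign p a) * (if k \<in> A then -1 else 1) * Pm s t k"
  using assms
proof (induction "card A" arbitrary: A s t rule: less_induct)
  case less
  show ?case
  proof (cases "A = {}")
    case True
    then show ?thesis by (simp add: cl_one_eq_blade[symmetric] rho_one)
  next
    case False
    obtain a1 a2 R where sp: "a1 < a2" "a2 < p + q" "R \<in> even_blades p q" "A = insert a1 (insert a2 R)"
      "a1 \<notin> R" "a2 \<notin> R" "card R < card A" "\<And>w. \<rho> (cl_blade A) w = \<rho> (cl_blade {a1, a2}) (\<rho> (cl_blade R) w)"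
      using even_blade_split[OF less.prems False] by blast
    have fR: "finite R" using sp(3) by (auto simp: even_blades_def intro: finite_subset)
    have "Pm (\<rho> (cl_blade A) s) (\<rho> (cl_blade A) t) k =
        basis_sign p a1 * basis_sign p a2 * (if k = a1 \<or> k = a2 then -1 else 1) * Pm (\<rho> (cl_blade R) s) (\<rho> (cl_blade R) t) k"
      unfolding sp(8) by (rule Pm_pair_blade[OF sp(1,2)])
    also have "\<dots> = basis_sign p a1 * basis_sign p a2 * (if k = a1 \<or> k = a2 then -1 else 1) *
        ((\<Prod>a\<in>R. basis_sign p a) * (if k \<in> R then -1 else 1) * Pm s t k)"
      using less.hyps[OF sp(7) sp(3)] by simp
    also have "\<dots> = (\<Prod>a\<in>A. basis_sign p a) * (if k \<in> A then -1 else 1) * Pm s t k"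
    proof -
      have "(\<Prod>a\<in>A. basis_sign p a) = basis_sign p a1 * (basis_sign p a2 * (\<Prod>a\<in>R. basis_sign p a))"
        unfolding sp(4) using sp(1,5,6) fR by simp
      moreover have "(if k \<in> A then -1 else (1::real)) = (if k = a1 \<or> k = a2 then -1 else 1) * (if k \<in> R then -1 else 1)"
        unfolding sp(4) using sp(5,6) by auto
      ultimately show ?thesis by (simp add: ac_simps)
    qed
    finally show ?thesis .
  qed
qed

definition tail_blade :: "nat set" where
  "tail_blade = {1..<p}"

lemma odd_p: "odd p" using p_3mod4 by presburger

lemma tail_blade_even: "tail_blade \<in> even_blades p q"
  unfolding tail_blade_def even_blades_def using odd_p by auto

lemma b_form_eq: "b_form p q \<rho> Pm s t = Pm (\<rho> (cl_blade tail_blade) s) t 0"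
proof -
  have "0 < p" using odd_p by (cases p) auto
  then show ?thesis unfolding b_form_def tail_blade_def by (simp add: pq_inner_std_basis basis_sign_def)
qed

lemma blade_sq_tail: "blade_sq p tail_blade = -1"
proof -
  have sh: "tail_blade = (+) 1 ` {0..<p-1}" unfolding tail_blade_def using odd_p
    using image_add_atLeastLessThan[of 1 0 "p-1"] by (simp add: add.commute)
  have i: "inversion_sign tail_blade tail_blade = reversal_sign (p - 1)" unfolding sh inversion_sign_shift inversion_sign_initial ..
  have s: "reversal_sign (p - 1) = -1"
  proof -
    obtain k where k: "p = 4 * k + 3" using p_3mod4 by (metis div_mult_mod_eq add.commute mult.commute)
    have "(p - 1) * (p - 1 - 1) = 2 * ((2 * k + 1) * (4 * k + 1))" using k by (simp add: algebra_simps)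
    then have "(p - 1) * (p - 1 - 1) div 2 = (2 * k + 1) * (4 * k + 1)" by simp
    moreover have "odd ((2 * k + 1) * (4 * k + 1))" by simp
    ultimately show ?thesis unfolding reversal_sign_def by (simp add: minus_one_power_iff)
  qed
  have q: "square_sign p tail_blade = 1"
  proof -
    have "square_sign p tail_blade = (\<Prod>i\<in>tail_blade. -1)" unfolding square_sign_def tail_blade_def by (intro prod.cong refl) (auto simp: cl_sq_def)
    also have "\<dots> = (-1) ^ (p - 1)" unfolding tail_blade_def by simp
    also have "\<dots> = 1" using odd_p by (simp add: minus_one_power_iff)
    finally show ?thesis .
  qed
  have "finite tail_blade" unfolding tail_blade_def by simp
  then show ?thesis unfolding blade_sq_def using i s q by (simp add: blade_sign_factor)
qed

lemma b_form_bilinear: "bilinear_form (b_form p q \<rho> Pm)"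
  unfolding bilinear_form_def b_form_eq
proof (intro conjI allI)
  fix s show "linear (\<lambda>t. Pm (\<rho> (cl_blade tail_blade) s) t 0)" by (rule Pm_lin_r)
next
  fix t
  have "linear ((\<lambda>x. Pm x t 0) \<circ> \<rho> (cl_blade tail_blade))"
    by (rule linear_compose[OF rho_lin[OF even_blades_cl_even[OF tail_blade_even]] Pm_lin_l])
  then show "linear (\<lambda>s. Pm (\<rho> (cl_blade tail_blade) s) t 0)" by (simp add: comp_def)
qed

text \<open>Each \<open>a \<in> A\<close> contributes exactly one factor \<open>-1\<close>: to the first product if
  \<open>0 < a < p\<close>, to the second if \<open>a \<ge> p\<close>, and to the last factor if \<open>a = 0\<close>.\<close>

lemma tail_blade_signs:
  assumes A: "A \<in> even_blades p q"
  shows "(\<Prod>a\<in>A. if a \<in> tail_blade then -1 else 1) * (\<Prod>a\<in>A. basis_sign p a) * (if 0 \<in> A then -1 else 1) = 1"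
proof -
  have fA: "finite A" and eA: "even (card A)" using A by (auto simp: even_blades_def intro: finite_subset)
  have "(if (0::nat) \<in> A then -1 else (1::real)) = (\<Prod>a\<in>A. if a = 0 then -1 else 1)"
    using fA by (simp add: prod.delta)
  then have "(\<Prod>a\<in>A. if a \<in> tail_blade then -1 else 1) * (\<Prod>a\<in>A. basis_sign p a) * (if 0 \<in> A then -1 else 1)
      = (\<Prod>a\<in>A. (if a \<in> tail_blade then -1 else 1) * basis_sign p a * (if a = 0 then -1 else 1))"
    by (simp add: prod.distrib)
  also have "\<dots> = (\<Prod>a\<in>A. -1)"
    using odd_p unfolding tail_blade_def basis_sign_def by (intro prod.cong refl) (cases "p = 0", auto)
  also have "\<dots> = 1" using eA by (simp add: minus_one_power_iff)
  finally show ?thesis .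
qed

lemma b_form_blade_invariant:
  assumes A: "A \<in> even_blades p q"
  shows "b_form p q \<rho> Pm (\<rho> (cl_blade A) s) (\<rho> (cl_blade A) t) = b_form p q \<rho> Pm s t"
proof -
  let ?c = "\<Prod>a\<in>A. if a \<in> tail_blade then -1 else (1::real)"
  have "b_form p q \<rho> Pm (\<rho> (cl_blade A) s) (\<rho> (cl_blade A) t)
      = Pm (?c *\<^sub>R \<rho> (cl_blade A) (\<rho> (cl_blade tail_blade) s)) (\<rho> (cl_blade A) t) 0"
    unfolding b_form_eq rho_even_blades_commute[OF A tail_blade_even] ..
  also have "\<dots> = ?c * ((\<Prod>a\<in>A. basis_sign p a) * (if 0 \<in> A then -1 else 1) * Pm (\<rho> (cl_blade tail_blade) s) t 0)"
    unfolding Pm_scale_l Pm_blade[OF A] ..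
  also have "\<dots> = Pm (\<rho> (cl_blade tail_blade) s) t 0"
    using tail_blade_signs[OF A] by (simp add: mult.assoc[symmetric])
  finally show ?thesis unfolding b_form_eq .
qed

lemma b_form_sym: "sym_form (b_form p q \<rho> Pm)"
  unfolding sym_form_def
proof (intro allI)
  fix s t
  have "b_form p q \<rho> Pm s t = b_form p q \<rho> Pm (\<rho> (cl_blade tail_blade) s) (\<rho> (cl_blade tail_blade) t)"
    by (rule b_form_blade_invariant[OF tail_blade_even, symmetric])
  also have "\<dots> = Pm (\<rho> (cl_blade tail_blade) (\<rho> (cl_blade tail_blade) s)) (\<rho> (cl_blade tail_blade) t) 0" by (rule b_form_eq)
  also have "\<rho> (cl_blade tail_blade) (\<rho> (cl_blade tail_blade) s) = blade_sq p tail_blade *\<^sub>R s"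
    using rho_blade_mult[OF tail_blade_even tail_blade_even, of s] by (simp add: blade_sq_def cl_one_eq_blade[symmetric] rho_one)
  also have "Pm (blade_sq p tail_blade *\<^sub>R s) (\<rho> (cl_blade tail_blade) t) 0 = - Pm s (\<rho> (cl_blade tail_blade) t) 0"
    unfolding Pm_scale_l blade_sq_tail by simp
  also have "\<dots> = Pm (\<rho> (cl_blade tail_blade) t) s 0" using Pm_antisym[of "\<rho> (cl_blade tail_blade) t" s 0] by simp
  also have "\<dots> = b_form p q \<rho> Pm t s" by (rule b_form_eq[symmetric])
  finally show "b_form p q \<rho> Pm s t = b_form p q \<rho> Pm t s" .
qed

lemma blade_invariant_b_form: "blade_invariant (b_form p q \<rho> Pm)"
  unfolding blade_invariant_def using b_form_blade_invariant by blast

lemma b_form_Khat_invariant: "invariant_form (Khat p q) \<rho> (b_form p q \<rho> Pm)"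
  using blade_invariant_b_form blade_invariant_iff_Khat_invariant[OF b_form_bilinear] by blast

lemma b_form_zero_imp_Pm_zero:
  assumes "\<And>s t. b_form p q \<rho> Pm s t = 0"
  shows "Pm = (\<lambda>s t i. 0)"
proof -
  have z0: "Pm s t 0 = 0" for s t
  proof -
    define s' where "s' = blade_sq p tail_blade *\<^sub>R \<rho> (cl_blade tail_blade) s"
    have "\<rho> (cl_blade tail_blade) s' = s" unfolding s'_def by (rule rho_blade_inverse[OF tail_blade_even])
    then have "Pm s t 0 = b_form p q \<rho> Pm s' t" by (simp add: b_form_eq)
    then show ?thesis using assms by simp
  qed
  have "Pm s t k = 0" for s t k
  proof (cases "0 < k \<and> k < p + q")
    case True
    then have "basis_sign p k * Pm s t k = 0"
      using Pm_pair_derivation[of 0 k s t 0] z0 by simp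
    then show ?thesis by (simp add: basis_sign_def split: if_splits)
  next
    case False
    then show ?thesis using z0 Pm_V by (cases "k = 0") auto
  qed
  then show ?thesis by (intro ext) simp
qed

lemma b_form_definite:
  assumes irr: "irreducible_under (cl_even p q) \<rho>"
  shows "Pm = (\<lambda>s t i. 0) \<or>
    (bilinear_form (b_form p q \<rho> Pm) \<and> sym_form (b_form p q \<rho> Pm) \<and>
     invariant_form (Khat p q) \<rho> (b_form p q \<rho> Pm) \<and>
     (pos_def (b_form p q \<rho> Pm) \<or> neg_def (b_form p q \<rho> Pm)))"
proof -
  obtain g where g: "bilinear_form g" "sym_form g" "pos_def g" "blade_invariant g"
    using exists_blade_invariant_inner_product[OF irr] by blast
  then obtain c where c: "b_form p q \<rho> Pm = (\<lambda>s t. c * g s t)"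
    using blade_invariant_form_unique[OF irr g b_form_bilinear b_form_sym blade_invariant_b_form] by blast
  have "Pm = (\<lambda>s t i. 0) \<or> pos_def (b_form p q \<rho> Pm) \<or> neg_def (b_form p q \<rho> Pm)"
    using b_form_zero_imp_Pm_zero scaled_pos_def_definite[OF g(3)] unfolding c by fastforce
  then show ?thesis using b_form_bilinear b_form_sym b_form_Khat_invariant by blast
qed

end
theorem mainTheorem8:
  fixes p q :: nat and \<rho> :: "mv \<Rightarrow> 'w::real_vector \<Rightarrow> 'w"
  assumes "p mod 4 = 3"
    and "cl0_module p q \<rho>"
  shows "(irreducible_under (cl_even p q) \<rho> \<longleftrightarrow> irreducible_under (Khat p q) \<rho>)
    \<and> (irreducible_under (cl_even p q) \<rho> \<longrightarrow>
         (\<exists>g. bilinear_form g \<and> sym_form g \<and> invariant_form (Khat p q) \<rho> g \<and> pos_def g \<and>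
              (\<forall>\<beta>. bilinear_form \<beta> \<and> sym_form \<beta> \<and> invariant_form (Khat p q) \<rho> \<beta> \<longrightarrow>
                    (\<exists>c::real. \<beta> = (\<lambda>s t. c * g s t)))))
    \<and> (\<forall>Pm. irreducible_under (cl_even p q) \<rho> \<and> wedge2_map p q Pm \<and> so_equivariant p q \<rho> Pm \<longrightarrow>
         Pm = (\<lambda>s t i. 0) \<or>
         (bilinear_form (b_form p q \<rho> Pm) \<and> sym_form (b_form p q \<rho> Pm) \<and>
          invariant_form (Khat p q) \<rho> (b_form p q \<rho> Pm) \<and>
          (pos_def (b_form p q \<rho> Pm) \<or> neg_def (b_form p q \<rho> Pm))))"
proof -
  interpret cl0_rep_3mod4 p q \<rho>
    using assms by unfold_locales
  have "Pm = (\<lambda>s t i. 0) \<or>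
      (bilinear_form (b_form p q \<rho> Pm) \<and> sym_form (b_form p q \<rho> Pm) \<and>
       invariant_form (Khat p q) \<rho> (b_form p q \<rho> Pm) \<and>
       (pos_def (b_form p q \<rho> Pm) \<or> neg_def (b_form p q \<rho> Pm)))"
    if "irreducible_under (cl_even p q) \<rho>" "wedge2_map p q Pm" "so_equivariant p q \<rho> Pm" for Pm
  proof -
    interpret equivariant_Pi p q \<rho> Pm
      using that(2,3) by unfold_locales
    show ?thesis using b_form_definite[OF that(1)] .
  qed
  then show ?thesis
    using irreducible_cl_even_iff_Khat Khat_invariant_inner_product_unique by blast
qed
end
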